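(* Assume the standing setting and Hypothesis $(H_a)$, and let $\varphi$ be as in Construction (C). Then $\lim_{x\to a^+}\varphi(z_1,x)/\varphi(z_2,x)=1$ for all $z_1,z_2\in\mathbb C$. In particular, $\tau f=\mu f$ is nonoscillatory at $a$ for every $\mu\in\mathbb R$.
   Context: Standing setting: Let $-\infty\le a<b\le\infty$ and let $p,q,r$ be Lebesgue measurable functions on $(a,b)$ with $r>0$ a.e., $r\in L^1_{loc}((a,b))$; $p>0$ a.e., $1/p\in L^1_{loc}((a,b))$; $q$ real-valued a.e., $q\in L^1_{loc}((a,b))$. Let $\tau f=\frac1r\big[-(pf')'+qf\big]$ act on functions $f$ with $f,pf'\in AC_{loc}((a,b))$; write $f^{[1]}=pf'$ and $W(f,g)=fg^{[1]}-f^{[1]}g$. For $\lambda\in\mathbb R$, the equation $\tau f=\lambda f$ is nonoscillatory at $a$ if its nontrivial real solutions have finitely many zeros near $a$; then there is a solution $u_a$, unique up to constant multiples, with $\lim_{x\to a^+}u_a(x)/v_a(x)=0$ for every solution $v_a$ linearly independent of $u_a$; $u_a$ is called principal at $a$ and any such $v_a$ nonprincipal at $a$. Hypothesis $(H_a)$: there exist $\lambda\in\mathbb R$ such that $\tau f=\lambda f$ is nonoscillatory at $a$, and $c\in(a,b)$, such that $\int_a^c|u_a(x)v_a(x)r(x)|\,dx<\infty$, where $u_a$, $v_a$ are principal resp. nonprincipal solutions of $\tau f=\lambda f$ at $a$. Construction (C): fix $\lambda\in\mathbb R$ as in $(H_a)$ and let $u_a$ (principal) and $v_a$ (nonprincipal)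 be solutions of $\tau f=\lambda f$ with $W(v_a,u_a)=1$. Set $\varphi_0=u_a$, $\varphi_n(x)=\int_a^x[u_a(t)v_a(x)-v_a(t)u_a(x)]\varphi_{n-1}(t)r(t)\,dt$ for $n\ge1$, $x\in(a,b)$, and $\varphi(z,x)=\sum_{n\ge0}\varphi_n(x)(z-\lambda)^n$; this series converges for all $z\in\mathbb C$, $x\in(a,b)$, is entire in $z$ and solves $\tau\varphi(z,\cdot)=z\varphi(z,\cdot)$. *)

theory Defs
  imports "HOL-Analysis.Analysis"
begin

definition ivl :: "ereal \<Rightarrow> ereal \<Rightarrow> real set" where
  "ivl a b = {x. a < ereal x \<and> ereal x < b}"

definition left_end_filter :: "ereal \<Rightarrow> real filter" where
  "left_end_filter a = (if a = -\<infinity> then at_bot else at_right (real_of_ereal a))"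

definition abs_cont_on :: "real \<Rightarrow> real \<Rightarrow> (real \<Rightarrow> 'a::real_normed_vector) \<Rightarrow> bool" where
  "abs_cont_on c d f \<longleftrightarrow>
     (\<forall>\<epsilon>>0. \<exists>\<delta>>0. \<forall>(n::nat) (s::nat \<Rightarrow> real) (t::nat \<Rightarrow> real).
        (\<forall>k<n. c \<le> s k \<and> s k \<le> t k \<and> t k \<le> d) \<and>
        (\<forall>j<n. \<forall>k<n. j \<noteq> k \<longrightarrow> t j \<le> s k \<or> t k \<le> s j) \<and>
        (\<Sum>k<n. t k - s k) < \<delta>
        \<longrightarrow> (\<Sum>k<n. norm (f (t k) - f (s k))) < \<epsilon>)"

definition AC_loc :: "real set \<Rightarrow> (real \<Rightarrow> 'a::real_normed_vector) \<Rightarrow> bool" where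
  "AC_loc I f \<longleftrightarrow> (\<forall>c d. c \<in> I \<and> d \<in> I \<and> c \<le> d \<longrightarrow> abs_cont_on c d f)"

definition L1_loc :: "real set \<Rightarrow> (real \<Rightarrow> real) \<Rightarrow> bool" where
  "L1_loc I g \<longleftrightarrow> (\<forall>c d. c \<in> I \<and> d \<in> I \<and> c \<le> d \<longrightarrow> set_integrable lebesgue {c..d} g)"

definition SL_coeffs :: "ereal \<Rightarrow> ereal \<Rightarrow> (real \<Rightarrow> real) \<Rightarrow> (real \<Rightarrow> real) \<Rightarrow> (real \<Rightarrow> real) \<Rightarrow> bool" where
  "SL_coeffs a b p q r \<longleftrightarrow>
     a < b \<and>
     set_borel_measurable lebesgue (ivl a b) p \<and>
     set_borel_measurable lebesgue (ivl a b) q \<and>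
     set_borel_measurable lebesgue (ivl a b) r \<and>
     (AE x in lebesgue. x \<in> ivl a b \<longrightarrow> r x > 0) \<and> L1_loc (ivl a b) r \<and>
     (AE x in lebesgue. x \<in> ivl a b \<longrightarrow> p x > 0) \<and> L1_loc (ivl a b) (\<lambda>x. 1 / p x) \<and>
     L1_loc (ivl a b) q"

text \<open>f is a solution of tau f = z f on (a,b), with quasi-derivative f1 = p f'.
  Both f and f1 are locally absolutely continuous, f' = f1/p a.e. and
  f1' = (q - z r) f a.e. (i.e. -(p f')' + q f = z r f).  The scalar field is generic
  so that it covers real solutions (real) and complex solutions (complex).\<close>
definition is_sol :: "ereal \<Rightarrow> ereal \<Rightarrow> (real \<Rightarrow> real) \<Rightarrow> (real \<Rightarrow> real) \<Rightarrow> (real \<Rightarrow> real)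
    \<Rightarrow> 'a::real_normed_field \<Rightarrow> (real \<Rightarrow> 'a) \<Rightarrow> (real \<Rightarrow> 'a) \<Rightarrow> bool" where
  "is_sol a b p q r z f f1 \<longleftrightarrow>
     AC_loc (ivl a b) f \<and> AC_loc (ivl a b) f1 \<and>
     (AE x in lebesgue. x \<in> ivl a b \<longrightarrow> (f has_vector_derivative (f1 x / of_real (p x))) (at x)) \<and>
     (AE x in lebesgue. x \<in> ivl a b \<longrightarrow>
        (f1 has_vector_derivative ((of_real (q x) - z * of_real (r x)) * f x)) (at x))"

definition nonosc_at_a :: "ereal \<Rightarrow> ereal \<Rightarrow> (real \<Rightarrow> real) \<Rightarrow> (real \<Rightarrow> real) \<Rightarrow> (real \<Rightarrow> real)
    \<Rightarrow> real \<Rightarrow> bool" where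
  "nonosc_at_a a b p q r lam \<longleftrightarrow>
     (\<forall>f f1. is_sol a b p q r lam f f1 \<and> (\<exists>x\<in>ivl a b. f x \<noteq> 0) \<longrightarrow>
        (\<exists>c\<in>ivl a b. finite {x. a < ereal x \<and> x < c \<and> f x = 0}))"

definition lin_indep_on :: "real set \<Rightarrow> (real \<Rightarrow> real) \<Rightarrow> (real \<Rightarrow> real) \<Rightarrow> bool" where
  "lin_indep_on I u v \<longleftrightarrow>
     (\<forall>\<alpha> \<beta>. (\<forall>x\<in>I. \<alpha> * u x + \<beta> * v x = 0) \<longrightarrow> \<alpha> = 0 \<and> \<beta> = 0)"

definition principal_at_a :: "ereal \<Rightarrow> ereal \<Rightarrow> (real \<Rightarrow> real) \<Rightarrow> (real \<Rightarrow> real) \<Rightarrow> (real \<Rightarrow> real)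
    \<Rightarrow> real \<Rightarrow> (real \<Rightarrow> real) \<Rightarrow> bool" where
  "principal_at_a a b p q r lam u \<longleftrightarrow>
     (\<exists>u1. is_sol a b p q r lam u u1) \<and>
     (\<forall>v v1. is_sol a b p q r lam v v1 \<and> lin_indep_on (ivl a b) u v \<longrightarrow>
        ((\<lambda>x. u x / v x) \<longlongrightarrow> 0) (left_end_filter a))"

primrec phi_n :: "ereal \<Rightarrow> (real \<Rightarrow> real) \<Rightarrow> (real \<Rightarrow> real) \<Rightarrow> (real \<Rightarrow> real)
    \<Rightarrow> nat \<Rightarrow> real \<Rightarrow> real" where
  "phi_n a u v r 0 = u"
| "phi_n a u v r (Suc n) = (\<lambda>x. LINT t:{t. a < ereal t \<and> t < x}|lebesgue.
        (u t * v x - v t * u x) * phi_n a u v r n t * r t)"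

definition phi :: "ereal \<Rightarrow> (real \<Rightarrow> real) \<Rightarrow> (real \<Rightarrow> real) \<Rightarrow> (real \<Rightarrow> real) \<Rightarrow> real
    \<Rightarrow> complex \<Rightarrow> real \<Rightarrow> complex" where
  "phi a u v r lam z x = (\<Sum>n. complex_of_real (phi_n a u v r n x) * (z - complex_of_real lam) ^ n)"

end

theory Submission
  imports Defs
begin

text \<open>
  Hypothesis (H_a) makes the Green kernel of tau - lambda integrable at a. The Wronskian normalisation
  makes u/v increasing (its derivative is 1/(p v^2)) with limit 0 at a, which gives the kernel bound
  |u(t) v(x) - v(t) u(x)| <= |v(t)| |u(x)| for a < t <= x near a. By induction
  |phi_n(x)| <= |u(x)| I(x)^n with I(x) = int_a^x |u v r| -> 0, so phi(z, x) / u(x) -> 1 for every z.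

  For nonoscillation, write a real solution f of tau f = mu f as f = A u + B v with the Wronskians
  A = W(v, f), B = W(f, u), whose derivatives are (lambda - mu) v f r and (mu - lambda) u f r.
  Between two consecutive zeros x1 < y1 of f near a, Rolle's theorem for f/u yields a zero y of B;
  bounding A and B on [y, y1] by |mu - lambda| I max |f/u| forces f/u = 0 there as soon as
  3 |mu - lambda| I < 1, a contradiction. So zeros cannot accumulate at a, unless f vanishes near a,
  and then f = 0 by uniqueness for the initial value problem.
\<close>

section \<open>Absolute continuity and the fundamental theorem of calculus\<close>

lemma negligible_open_superset_small:
  assumes "negligible N" "e > 0"
  obtains G where "open G" "N \<subseteq> G" "G \<in> lmeasurable" "measure lebesgue G < e"
proof -
  have N: "N \<in> lmeasurable" "measure lebesgue N = 0"
    using assms(1) negligible_imp_measurable negligible_imp_measure0 by blast+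
  obtain T where T: "open T" "N \<subseteq> T" "T - N \<in> lmeasurable" "emeasure lebesgue (T - N) < ennreal e"
    using sets_lebesgue_outer_open[OF fmeasurableD[OF N(1)] assms(2)] by blast
  have TN: "T = (T - N) \<union> N" using T(2) by blast
  have "T \<in> lmeasurable" using T(3) N(1) by (subst TN) (rule fmeasurable.Un)
  moreover have "measure lebesgue T \<le> measure lebesgue (T - N) + measure lebesgue N"
    by (subst TN) (rule measure_Un_le; use T N in auto)
  moreover have "measure lebesgue (T - N) < e"
    using T(3,4) assms(2) by (simp add: emeasure_eq_measure2 ennreal_less_iff)
  ultimately show ?thesis using that T N(2) by fastforce
qed

definition nonoverlapping :: "'i set \<Rightarrow> real \<Rightarrow> real \<Rightarrow> ('i \<Rightarrow> real) \<Rightarrow> ('i \<Rightarrow> real) \<Rightarrow> bool" where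
  "nonoverlapping I c d s t \<longleftrightarrow>
     (\<forall>i\<in>I. c \<le> s i \<and> s i \<le> t i \<and> t i \<le> d) \<and> (\<forall>i\<in>I. \<forall>j\<in>I. i \<noteq> j \<longrightarrow> t i \<le> s j \<or> t j \<le> s i)"

lemma abs_cont_on_iff_nonoverlapping:
  "abs_cont_on c d F \<longleftrightarrow> (\<forall>e>0. \<exists>\<delta>>0. \<forall>(n::nat) s t. nonoverlapping {..<n} c d s t \<and>
     (\<Sum>k<n. t k - s k) < \<delta> \<longrightarrow> (\<Sum>k<n. norm (F (t k) - F (s k))) < e)"
  unfolding abs_cont_on_def nonoverlapping_def by (simp add: conj_assoc Ball_def lessThan_iff)

lemma abs_cont_on_finite_family:
  fixes F :: "real \<Rightarrow> 'a::real_normed_vector"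
  assumes "abs_cont_on c d F" "e > 0"
  shows "\<exists>\<delta>>0. \<forall>I s t. finite I \<and> nonoverlapping I c d s t \<and> (\<Sum>i\<in>I. t i - s i) < \<delta>
           \<longrightarrow> (\<Sum>i\<in>I. norm (F (t i) - F (s i))) < e"
proof -
  obtain \<delta> where \<delta>: "\<delta> > 0" and H: "\<forall>(n::nat) s t. nonoverlapping {..<n} c d s t \<and>
      (\<Sum>k<n. t k - s k) < \<delta> \<longrightarrow> (\<Sum>k<n. norm (F (t k) - F (s k))) < e"
    using assms unfolding abs_cont_on_iff_nonoverlapping by blast
  have "(\<Sum>i\<in>I. norm (F (t i) - F (s i))) < e"
    if I: "finite I" "nonoverlapping I c d s t" "(\<Sum>i\<in>I. t i - s i) < \<delta>" for I and s t :: "_ \<Rightarrow> real"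
  proof -
    obtain h where h: "bij_betw h {..<card I} I"
      using ex_bij_betw_nat_finite[OF I(1)] by (auto simp: lessThan_atLeast0)
    have hI: "h k \<in> I" if "k \<in> {..<card I}" for k using h that by (auto simp: bij_betw_def)
    have inj: "h j \<noteq> h k" if "j \<in> {..<card I}" "k \<in> {..<card I}" "j \<noteq> k" for j k
      using h that by (auto simp: bij_betw_def inj_on_def)
    have "nonoverlapping {..<card I} c d (s \<circ> h) (t \<circ> h)"
      using I(2) hI inj unfolding nonoverlapping_def o_def by meson
    moreover have "(\<Sum>k<card I. t (h k) - s (h k)) < \<delta>"
      using I(3) sum.reindex_bij_betw[OF h, of "\<lambda>i. t i - s i"] by simp
    ultimately have "(\<Sum>k<card I. norm (F (t (h k)) - F (s (h k)))) < e"
      using H[rule_format, of "card I" "s \<circ> h" "t \<circ> h"] by simp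
    then show ?thesis
      using sum.reindex_bij_betw[OF h, of "\<lambda>i. norm (F (t i) - F (s i))"] by simp
  qed
  then show ?thesis using \<delta> by blast
qed

lemma tagged_division_of_real_interval:
  fixes c d :: real
  assumes "p tagged_division_of {c..d}" "(x, K) \<in> p"
  shows "K = {Inf K..Sup K}" "Inf K \<le> x" "x \<le> Sup K" "c \<le> Inf K" "Sup K \<le> d"
proof -
  obtain s t where K: "K = cbox s t" using tagged_division_ofD(4)[OF assms] by blast
  have "x \<in> K" "K \<subseteq> {c..d}" using tagged_division_ofD(2,3)[OF assms] by auto
  with K show "K = {Inf K..Sup K}" "Inf K \<le> x" "x \<le> Sup K" "c \<le> Inf K" "Sup K \<le> d"
    by auto
qed

lemma tagged_division_nondegenerate_nonoverlapping:
  fixes c d :: real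
  assumes p: "p tagged_division_of {c..d}" and q: "q \<subseteq> {(x, K) \<in> p. Inf K < Sup K}"
  shows "nonoverlapping q c d (\<lambda>i. Inf (snd i)) (\<lambda>i. Sup (snd i))"
  unfolding nonoverlapping_def
proof (rule conjI; intro ballI impI)
  fix i assume "i \<in> q"
  then show "c \<le> Inf (snd i) \<and> Inf (snd i) \<le> Sup (snd i) \<and> Sup (snd i) \<le> d"
    using tagged_division_of_real_interval[OF p, of "fst i" "snd i"] q by auto
next
  fix i j assume ij: "i \<in> q" "j \<in> q" "i \<noteq> j"
  obtain x K y L where xy: "i = (x, K)" "j = (y, L)" by fastforce
  with ij q have KL: "(x, K) \<in> p" "(y, L) \<in> p" "(x, K) \<noteq> (y, L)" "Inf K < Sup K" "Inf L < Sup L"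
    by auto
  have "interior K \<inter> interior L = {}" using tagged_division_ofD(5)[OF p KL(1-3)] .
  then have "{Inf K<..<Sup K} \<inter> {Inf L<..<Sup L} = {}"
    using tagged_division_of_real_interval(1)[OF p KL(1)] tagged_division_of_real_interval(1)[OF p KL(2)]
    by (metis interior_atLeastAtMost_real)
  moreover have "(max (Inf K) (Inf L) + min (Sup K) (Sup L)) / 2 \<in> {Inf K<..<Sup K} \<inter> {Inf L<..<Sup L}"
    if "\<not> (Sup K \<le> Inf L \<or> Sup L \<le> Inf K)"
    using KL(4,5) that by auto
  ultimately have "Sup K \<le> Inf L \<or> Sup L \<le> Inf K" by blast
  then show "Sup (snd i) \<le> Inf (snd j) \<or> Sup (snd j) \<le> Inf (snd i)" using xy by simp
qed

lemma tagged_division_subset_lengths_le_measure: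
  fixes G :: "real set"
  assumes p: "p tagged_division_of {c..d}" and "q \<subseteq> p"
    and sub: "\<And>x K. (x, K) \<in> q \<Longrightarrow> K \<subseteq> G" and G: "G \<in> lmeasurable"
  shows "(\<Sum>(x, K)\<in>q. Sup K - Inf K) \<le> measure lebesgue G"
proof -
  have partial: "q tagged_partial_division_of {c..d}"
    using tagged_partial_division_subset[OF _ assms(2)] p by (simp add: tagged_division_of_def)
  have q: "q tagged_division_of \<Union>(snd ` q)"
    by (rule tagged_partial_division_of_Union_self[OF partial])
  have div: "snd ` q division_of \<Union>(snd ` q)"
    by (rule partial_division_of_tagged_division[OF partial])
  have "(\<Sum>(x, K)\<in>q. Sup K - Inf K) = (\<Sum>(x, K)\<in>q. measure lborel K)"
  proof (intro sum.cong refl)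
    fix i assume "i \<in> q"
    moreover obtain x K where i: "i = (x, K)" by fastforce
    ultimately have "K = {Inf K..Sup K}" "Inf K \<le> Sup K"
      using tagged_division_of_real_interval[OF p, of x K] assms(2) by auto
    then show "(case i of (x, K) \<Rightarrow> Sup K - Inf K) = (case i of (x, K) \<Rightarrow> measure lborel K)"
      using i by (metis case_prod_conv content_real)
  qed
  also have "\<dots> = (\<Sum>K\<in>snd ` q. measure lborel K)"
    by (rule sum.over_tagged_division_lemma[OF q]) (simp add: content_eq_0_interior)
  also have "\<dots> = measure lebesgue (\<Union>(snd ` q))"
  proof -
    have "measure lborel K = measure lebesgue K" if "K \<in> snd ` q" for K
      using division_ofD(4)[OF div that] by auto
    then show ?thesis using content_division[OF div] by (simp cong: sum.cong)
  qed
  also have "\<dots> \<le> measure lebesgue G"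
  proof (rule measure_mono_fmeasurable[OF _ _ G])
    show "\<Union>(snd ` q) \<subseteq> G" using sub by force
  qed (use lmeasurable_division[OF div] in auto)
  finally show ?thesis .
qed

lemma abs_cont_on_tagged_division_increments_small:
  fixes F :: "real \<Rightarrow> real"
  assumes "abs_cont_on c d F" "e > 0"
  shows "\<exists>\<delta>>0. \<forall>p q G. p tagged_division_of {c..d} \<and> q \<subseteq> p \<and> (\<forall>(x, K)\<in>q. K \<subseteq> G) \<and>
       G \<in> lmeasurable \<and> measure lebesgue G < \<delta> \<longrightarrow> \<bar>\<Sum>(x, K)\<in>q. F (Sup K) - F (Inf K)\<bar> \<le> e"
proof -
  obtain \<delta> where \<delta>: "\<delta> > 0" and AC: "\<forall>(I :: (real \<times> real set) set) s t.
      finite I \<and> nonoverlapping I c d s t \<and> (\<Sum>i\<in>I. t i - s i) < \<delta>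
      \<longrightarrow> (\<Sum>i\<in>I. norm (F (t i) - F (s i))) < e"
    using abs_cont_on_finite_family[OF assms] by blast
  show ?thesis
  proof (intro exI[of _ \<delta>] conjI allI impI \<delta>, elim conjE)
    fix p q G
    assume p: "p tagged_division_of {c..d}" and qp: "q \<subseteq> p" and "\<forall>(x, K)\<in>q. K \<subseteq> G"
      and G: "G \<in> lmeasurable" "measure lebesgue G < \<delta>"
    then have sub: "\<And>x K. (x, K) \<in> q \<Longrightarrow> K \<subseteq> G" by blast
    have fin: "finite q" using p qp finite_subset by blast
    have le: "Inf (snd i) \<le> Sup (snd i)" if "i \<in> q" for i
      using tagged_division_of_real_interval(2,3)[OF p, of "fst i" "snd i"] that qp by auto
    define q' where "q' = {(x, K) \<in> q. Inf K < Sup K}"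
    have q'q: "q' \<subseteq> q" unfolding q'_def by auto
    have "\<bar>\<Sum>(x, K)\<in>q. F (Sup K) - F (Inf K)\<bar> \<le> (\<Sum>(x, K)\<in>q. \<bar>F (Sup K) - F (Inf K)\<bar>)"
      by (rule order_trans[OF sum_abs]) (simp add: case_prod_unfold)
    also have "\<dots> = (\<Sum>(x, K)\<in>q'. \<bar>F (Sup K) - F (Inf K)\<bar>)"
    proof (rule sum.mono_neutral_right[OF fin q'q], rule ballI)
      fix i assume "i \<in> q - q'"
      then have "Inf (snd i) = Sup (snd i)" using le[of i] unfolding q'_def by auto
      then show "(case i of (x, K) \<Rightarrow> \<bar>F (Sup K) - F (Inf K)\<bar>) = 0" by (simp add: case_prod_unfold)
    qed
    also have "\<dots> = (\<Sum>i\<in>q'. norm (F (Sup (snd i)) - F (Inf (snd i))))" by (simp add: case_prod_unfold)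
    also have "\<dots> < e"
    proof (rule AC[rule_format], intro conjI)
      show "finite q'" using finite_subset[OF q'q fin] .
      show "nonoverlapping q' c d (\<lambda>i. Inf (snd i)) (\<lambda>i. Sup (snd i))"
        by (rule tagged_division_nondegenerate_nonoverlapping[OF p]) (use qp in \<open>auto simp: q'_def\<close>)
      have "(\<Sum>i\<in>q'. Sup (snd i) - Inf (snd i)) \<le> (\<Sum>(x, K)\<in>q. Sup K - Inf K)"
        using fin q'q le by (auto simp: case_prod_unfold intro: sum_mono2)
      also have "\<dots> \<le> measure lebesgue G"
        by (rule tagged_division_subset_lengths_le_measure[OF p qp sub G(1)])
      finally show "(\<Sum>i\<in>q'. Sup (snd i) - Inf (snd i)) < \<delta>" using G(2) by simp
    qed
    finally show "\<bar>\<Sum>(x, K)\<in>q. F (Sup K) - F (Inf K)\<bar> \<le> e" by simp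
  qed
qed

lemma has_real_derivative_increment_bound:
  assumes "(F has_real_derivative D) (at x)" "e > 0"
  shows "\<exists>r>0. \<forall>s t. s \<le> x \<longrightarrow> x \<le> t \<longrightarrow> {s..t} \<subseteq> ball x r \<longrightarrow>
           \<bar>F t - F s - D * (t - s)\<bar> \<le> e * (t - s)"
proof -
  have "(F has_derivative (\<lambda>h. D * h)) (at x)"
    using assms(1) by (simp add: has_field_derivative_def)
  then obtain r where r: "r > 0" "\<forall>y. norm (y - x) < r \<longrightarrow> norm (F y - F x - D * (y - x)) \<le> e * norm (y - x)"
    using assms(2) unfolding has_derivative_within_alt by blast
  then have r': "\<forall>y. \<bar>y - x\<bar> < r \<longrightarrow> \<bar>F y - F x - D * (y - x)\<bar> \<le> e * \<bar>y - x\<bar>" by simp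
  have "\<bar>F t - F s - D * (t - s)\<bar> \<le> e * (t - s)" if "s \<le> x" "x \<le> t" "{s..t} \<subseteq> ball x r" for s t
  proof -
    have "s \<in> {s..t}" "t \<in> {s..t}" using that(1,2) by auto
    then have "s \<in> ball x r" "t \<in> ball x r" using that(3) by blast+
    then have "\<bar>s - x\<bar> < r" "\<bar>t - x\<bar> < r" by (auto simp: dist_real_def abs_minus_commute)
    then have "\<bar>F t - F x - D * (t - x)\<bar> \<le> e * \<bar>t - x\<bar>" "\<bar>F s - F x - D * (s - x)\<bar> \<le> e * \<bar>s - x\<bar>"
      using r' by blast+
    moreover have "e * \<bar>t - x\<bar> + e * \<bar>s - x\<bar> = e * (t - s)"
      using that(1,2) by (simp add: algebra_simps)
    moreover have "F t - F s - D * (t - s) = (F t - F x - D * (t - x)) - (F s - F x - D * (s - x))"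
      by (simp add: algebra_simps)
    ultimately show ?thesis by linarith
  qed
  then show ?thesis using r(1) by blast
qed

lemma tagged_division_derivative_sum_bound:
  fixes F g :: "real \<Rightarrow> real"
  assumes p: "p tagged_division_of {c..d}" and "q \<subseteq> p" and "c \<le> d" "e \<ge> 0"
    and approx: "\<And>x K. (x, K) \<in> q \<Longrightarrow>
       \<bar>F (Sup K) - F (Inf K) - g x * (Sup K - Inf K)\<bar> \<le> e * (Sup K - Inf K)"
  shows "\<bar>\<Sum>(x, K)\<in>q. F (Sup K) - F (Inf K) - measure lborel K * g x\<bar> \<le> e * (d - c)"
proof -
  note iv = tagged_division_of_real_interval[OF p]
  have fin: "finite q" using p assms(2) finite_subset by blast
  have len: "measure lborel K = Sup K - Inf K" if "(x, K) \<in> q" for x K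
    using iv[of x K] that assms(2) by (metis content_real order_trans subsetD)
  have "\<bar>\<Sum>(x, K)\<in>q. F (Sup K) - F (Inf K) - measure lborel K * g x\<bar>
      \<le> (\<Sum>(x, K)\<in>q. \<bar>F (Sup K) - F (Inf K) - measure lborel K * g x\<bar>)"
    by (rule order_trans[OF sum_abs]) (simp add: case_prod_unfold)
  also have "\<dots> \<le> (\<Sum>(x, K)\<in>q. e * measure lborel K)"
    using approx len by (intro sum_mono) (auto simp: mult.commute)
  also have "\<dots> \<le> (\<Sum>(x, K)\<in>p. e * measure lborel K)"
    using assms(2,4) p by (intro sum_mono2) auto
  also have "\<dots> = e * (\<Sum>(x, K)\<in>p. measure lborel K)"
    by (simp add: sum_distrib_left case_prod_unfold)
  also have "\<dots> = e * (d - c)"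
    using additive_content_tagged_division[OF p[unfolded box_real(2)[symmetric]]] assms(3)
    by (simp add: case_prod_unfold)
  finally show ?thesis .
qed

lemma derivative_gauge_exists:
  fixes F g :: "real \<Rightarrow> real"
  assumes G: "open G" "N \<subseteq> G" and "e > 0"
    and der: "\<forall>x\<in>{c..d} - N. (F has_real_derivative g x) (at x)"
  shows "\<exists>\<gamma>. gauge \<gamma> \<and> (\<forall>x\<in>N. \<gamma> x \<subseteq> G) \<and> (\<forall>x\<in>{c..d} - N. \<forall>s t.
           s \<le> x \<longrightarrow> x \<le> t \<longrightarrow> {s..t} \<subseteq> \<gamma> x \<longrightarrow> \<bar>F t - F s - g x * (t - s)\<bar> \<le> e * (t - s))"
proof -
  have "\<forall>x\<in>{c..d} - N. \<exists>r>0. \<forall>s t. s \<le> x \<longrightarrow> x \<le> t \<longrightarrow> {s..t} \<subseteq> ball x r \<longrightarrow>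
      \<bar>F t - F s - g x * (t - s)\<bar> \<le> e * (t - s)"
    using has_real_derivative_increment_bound \<open>e > 0\<close> der by blast
  then obtain R where R: "\<forall>x\<in>{c..d} - N. R x > 0 \<and> (\<forall>s t. s \<le> x \<longrightarrow> x \<le> t \<longrightarrow>
      {s..t} \<subseteq> ball x (R x) \<longrightarrow> \<bar>F t - F s - g x * (t - s)\<bar> \<le> e * (t - s))"
    by (metis (no_types, lifting) bchoice)
  define \<gamma> where "\<gamma> x = (if x \<in> N then G else if x \<in> {c..d} then ball x (R x) else UNIV)" for x
  have "gauge \<gamma>" unfolding gauge_def \<gamma>_def using G R by auto
  then show ?thesis using R unfolding \<gamma>_def by auto
qed

lemma tagged_division_increment_estimate:
  fixes F g g0 :: "real \<Rightarrow> real"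
  assumes p: "p tagged_division_of {c..d}" and "c \<le> d" "e \<ge> 0" and fine: "\<gamma> fine p"
    and \<gamma>N: "\<forall>x\<in>N. \<gamma> x \<subseteq> G"
    and \<gamma>der: "\<forall>x\<in>{c..d} - N. \<forall>s t. s \<le> x \<longrightarrow> x \<le> t \<longrightarrow> {s..t} \<subseteq> \<gamma> x \<longrightarrow>
       \<bar>F t - F s - g x * (t - s)\<bar> \<le> e * (t - s)"
    and small: "\<And>q. q \<subseteq> p \<Longrightarrow> \<forall>(x, K)\<in>q. K \<subseteq> G \<Longrightarrow> \<bar>\<Sum>(x, K)\<in>q. F (Sup K) - F (Inf K)\<bar> \<le> e"
    and g0: "\<And>x. x \<in> N \<Longrightarrow> g0 x = 0" "\<And>x. x \<notin> N \<Longrightarrow> g0 x = g x"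
  shows "\<bar>F d - F c - (\<Sum>(x, K)\<in>p. measure lborel K * g0 x)\<bar> \<le> e * (d - c) + e"
proof -
  note iv = tagged_division_of_real_interval[OF p]
  have sub: "K \<subseteq> \<gamma> x" if "(x, K) \<in> p" for x K using fine that unfolding fine_def by blast
  define p1 where "p1 = {(x, K) \<in> p. x \<notin> N}"
  define p2 where "p2 = {(x, K) \<in> p. x \<in> N}"
  have "finite p" using p by blast
  then have p12: "p = p1 \<union> p2" "p1 \<inter> p2 = {}" "finite p1" "finite p2"
    unfolding p1_def p2_def by (auto intro: rev_finite_subset)
  have "\<bar>\<Sum>(x, K)\<in>p2. F (Sup K) - F (Inf K)\<bar> \<le> e"
    using small[of p2] sub \<gamma>N unfolding p2_def by fastforce
  moreover have "\<bar>\<Sum>(x, K)\<in>p1. F (Sup K) - F (Inf K) - measure lborel K * g0 x\<bar> \<le> e * (d - c)"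
  proof (rule tagged_division_derivative_sum_bound[OF p _ assms(2,3)])
    fix x K assume "(x, K) \<in> p1"
    then have xK: "(x, K) \<in> p" "x \<notin> N" by (auto simp: p1_def)
    then have "{Inf K..Sup K} \<subseteq> \<gamma> x" "x \<in> {c..d} - N" using sub iv[OF xK(1)] by auto
    then show "\<bar>F (Sup K) - F (Inf K) - g0 x * (Sup K - Inf K)\<bar> \<le> e * (Sup K - Inf K)"
      using \<gamma>der iv(2,3)[OF xK(1)] g0(2)[OF xK(2)] by simp
  qed (auto simp: p1_def)
  moreover have "(\<Sum>(x, K)\<in>p2. measure lborel K * g0 x) = 0"
    by (rule sum.neutral) (auto simp: p2_def g0(1))
  then have "F d - F c - (\<Sum>(x, K)\<in>p. measure lborel K * g0 x)
      = (\<Sum>(x, K)\<in>p1. F (Sup K) - F (Inf K) - measure lborel K * g0 x) + (\<Sum>(x, K)\<in>p2. F (Sup K) - F (Inf K))"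
    using additive_tagged_division_1[OF assms(2) p, of F] p12
    by (simp add: sum.union_disjoint sum_subtractf case_prod_unfold)
  ultimately show ?thesis by linarith
qed

lemma abs_cont_on_has_integral_derivative:
  fixes F g :: "real \<Rightarrow> real"
  assumes cd: "c \<le> d" and ac: "abs_cont_on c d F" and g: "g integrable_on {c..d}"
    and der: "AE x in lebesgue. x \<in> {c..d} \<longrightarrow> (F has_real_derivative g x) (at x)"
  shows "(g has_integral (F d - F c)) {c..d}"
proof -
  obtain N where N: "N \<in> null_sets lebesgue"
    and derN: "\<And>x. x \<notin> N \<Longrightarrow> x \<in> {c..d} \<Longrightarrow> (F has_real_derivative g x) (at x)"
    using AE_E3[OF der] by auto
  then have derN': "\<forall>x\<in>{c..d} - N. (F has_real_derivative g x) (at x)" by blast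
  have negN: "negligible N" using N negligible_iff_null_sets by blast
  define g0 where "g0 x = (if x \<in> N then 0 else g x)" for x
  obtain J where J: "(g has_integral J) {c..d}" using g by blast
  have J0: "(g0 has_integral J) {c..d}"
    by (rule has_integral_spike[OF negN _ J]) (simp add: g0_def)
  have estimate: "\<bar>F d - F c - J\<bar> \<le> e * (d - c + 2)" if e: "e > 0" for e
  proof -
    obtain \<delta> where \<delta>: "\<delta> > 0" and small: "\<forall>p q G. p tagged_division_of {c..d} \<and> q \<subseteq> p \<and>
        (\<forall>(x, K)\<in>q. K \<subseteq> G) \<and> G \<in> lmeasurable \<and> measure lebesgue G < \<delta> \<longrightarrow>
        \<bar>\<Sum>(x, K)\<in>q. F (Sup K) - F (Inf K)\<bar> \<le> e"
      using abs_cont_on_tagged_division_increments_small[OF ac e] by blast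
    obtain G where G: "open G" "N \<subseteq> G" "G \<in> lmeasurable" "measure lebesgue G < \<delta>"
      using negligible_open_superset_small[OF negN \<delta>] by blast
    obtain \<gamma>2 where \<gamma>2: "gauge \<gamma>2" "\<forall>x\<in>N. \<gamma>2 x \<subseteq> G" "\<forall>x\<in>{c..d} - N. \<forall>s t.
        s \<le> x \<longrightarrow> x \<le> t \<longrightarrow> {s..t} \<subseteq> \<gamma>2 x \<longrightarrow> \<bar>F t - F s - g x * (t - s)\<bar> \<le> e * (t - s)"
      using derivative_gauge_exists[OF G(1,2) e derN'] by (elim exE conjE) blast
    obtain \<gamma>1 where \<gamma>1: "gauge \<gamma>1" "\<And>\<D>. \<D> tagged_division_of {c..d} \<and> \<gamma>1 fine \<D> \<Longrightarrow>
        norm ((\<Sum>(x, K)\<in>\<D>. measure lborel K *\<^sub>R g0 x) - J) < e"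
      using J0 e unfolding has_integral_real by meson
    obtain p where p: "p tagged_division_of {c..d}" and fine: "(\<lambda>x. \<gamma>1 x \<inter> \<gamma>2 x) fine p"
      using fine_division_exists_real[OF gauge_Int[OF \<gamma>1(1) \<gamma>2(1)]] by blast
    have fine1: "\<gamma>1 fine p" and fine2: "\<gamma>2 fine p" using fine fine_Int by blast+
    have "\<bar>F d - F c - (\<Sum>(x, K)\<in>p. measure lborel K * g0 x)\<bar> \<le> e * (d - c) + e"
    proof (rule tagged_division_increment_estimate[OF p cd _ fine2 \<gamma>2(2,3)])
      show "\<bar>\<Sum>(x, K)\<in>q. F (Sup K) - F (Inf K)\<bar> \<le> e" if "q \<subseteq> p" "\<forall>(x, K)\<in>q. K \<subseteq> G" for q
        using small that p G(3,4) by blast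
    qed (use e in \<open>auto simp: g0_def\<close>)
    moreover have "\<bar>(\<Sum>(x, K)\<in>p. measure lborel K * g0 x) - J\<bar> < e"
      using \<gamma>1(2)[of p] p fine1 by simp
    ultimately show ?thesis by (simp add: algebra_simps)
  qed
  have "\<bar>F d - F c - J\<bar> \<le> 0 + e" if "e > 0" for e
  proof -
    have pos: "d - c + 2 > 0" using cd by simp
    have "\<bar>F d - F c - J\<bar> \<le> e / (d - c + 2) * (d - c + 2)"
      using estimate[of "e / (d - c + 2)"] pos that by simp
    then show ?thesis using pos by simp
  qed
  then have "\<bar>F d - F c - J\<bar> \<le> 0" by (rule field_le_epsilon)
  then show ?thesis using J by simp
qed

lemma ivl_convex:
  assumes "c \<in> ivl a b" "d \<in> ivl a b" "c \<le> x" "x \<le> d"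
  shows "x \<in> ivl a b"
proof -
  have 1: "a < ereal c" "ereal d < b" using assms(1,2) unfolding ivl_def by auto
  have 2: "ereal c \<le> ereal x" "ereal x \<le> ereal d" using assms(3,4) by auto
  show ?thesis using less_le_trans[OF 1(1) 2(1)] le_less_trans[OF 2(2) 1(2)] unfolding ivl_def by simp
qed

lemma atLeastAtMost_subset_ivl: "c \<in> ivl a b \<Longrightarrow> d \<in> ivl a b \<Longrightarrow> {c..d} \<subseteq> ivl a b"
  using ivl_convex[of c a b d] by (simp add: subset_iff)

lemma ivl_around:
  assumes "x \<in> ivl a b"
  obtains c d where "c \<in> ivl a b" "d \<in> ivl a b" "c < x" "x < d"
proof -
  have ax: "a < ereal x" and xb: "ereal x < b" using assms unfolding ivl_def by auto
  obtain c where c: "a < ereal c" "ereal c < ereal x" using ereal_dense2[OF ax] by blast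
  obtain d where d: "ereal x < ereal d" "ereal d < b" using ereal_dense2[OF xb] by blast
  have "ereal c < b" "a < ereal d" using less_trans[OF c(2) xb] less_trans[OF ax d(1)] .
  then have "c \<in> ivl a b" "d \<in> ivl a b" using c d unfolding ivl_def by auto
  then show ?thesis using that c(2) d(1) by simp
qed

lemma abs_cont_on_imp_continuous_on:
  fixes f :: "real \<Rightarrow> real"
  assumes "abs_cont_on c d f"
  shows "continuous_on {c..d} f"
  unfolding continuous_on_iff
proof (intro ballI allI impI)
  fix x e :: real assume x: "x \<in> {c..d}" and e: "e > 0"
  obtain \<delta> where \<delta>: "\<delta> > 0" and H: "\<forall>(n::nat) s t. nonoverlapping {..<n} c d s t \<and>
      (\<Sum>k<n. t k - s k) < \<delta> \<longrightarrow> (\<Sum>k<n. norm (f (t k) - f (s k))) < e"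
    using assms e unfolding abs_cont_on_iff_nonoverlapping by blast
  show "\<exists>d'>0. \<forall>y\<in>{c..d}. dist y x < d' \<longrightarrow> dist (f y) (f x) < e"
  proof (intro exI[of _ \<delta>] conjI ballI impI \<delta>)
    fix y assume y: "y \<in> {c..d}" "dist y x < \<delta>"
    then have "nonoverlapping {..<1::nat} c d (\<lambda>_. min x y) (\<lambda>_. max x y)" "max x y - min x y < \<delta>"
      using x unfolding nonoverlapping_def by (auto simp: dist_real_def)
    then have "\<bar>f (max x y) - f (min x y)\<bar> < e"
      using H[rule_format, of 1 "\<lambda>_. min x y" "\<lambda>_. max x y"] by simp
    then show "dist (f y) (f x) < e"
      by (cases "x \<le> y") (auto simp: max_def min_def dist_real_def abs_minus_commute)
  qed
qed

lemma AC_loc_imp_continuous_on: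
  fixes f :: "real \<Rightarrow> real"
  assumes "AC_loc (ivl a b) f" "c \<in> ivl a b" "d \<in> ivl a b"
  shows "continuous_on {c..d} f"
  using assms abs_cont_on_imp_continuous_on unfolding AC_loc_def by (cases "c \<le> d") auto

lemma AC_loc_imp_isCont:
  fixes f :: "real \<Rightarrow> real"
  assumes "AC_loc (ivl a b) f" "x \<in> ivl a b"
  shows "isCont f x"
proof -
  obtain c d where cd: "c \<in> ivl a b" "d \<in> ivl a b" "c < x" "x < d" using ivl_around[OF assms(2)] .
  then show ?thesis
    using AC_loc_imp_continuous_on[OF assms(1) cd(1,2)] continuous_on_interior[of "{c..d}" f x] by simp
qed

lemma abs_cont_on_lipschitz_comb:
  fixes F f g :: "real \<Rightarrow> real"
  assumes f: "abs_cont_on c d f" and g: "abs_cont_on c d g"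
    and K: "\<And>s t. c \<le> s \<Longrightarrow> s \<le> t \<Longrightarrow> t \<le> d \<Longrightarrow> \<bar>F t - F s\<bar> \<le> K * (\<bar>f t - f s\<bar> + \<bar>g t - g s\<bar>)"
  shows "abs_cont_on c d F"
  unfolding abs_cont_on_iff_nonoverlapping
proof (intro allI impI)
  fix e :: real assume e: "e > 0"
  define K' where "K' = \<bar>K\<bar> + 1"
  have K': "K' > 0" unfolding K'_def by simp
  then have e': "e / (2 * K') > 0" using e by simp
  obtain \<delta>1 where d1: "\<delta>1 > 0" and H1: "\<forall>(n::nat) s t. nonoverlapping {..<n} c d s t \<and>
      (\<Sum>k<n. t k - s k) < \<delta>1 \<longrightarrow> (\<Sum>k<n. norm (f (t k) - f (s k))) < e / (2 * K')"
    using f e' unfolding abs_cont_on_iff_nonoverlapping by blast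
  obtain \<delta>2 where d2: "\<delta>2 > 0" and H2: "\<forall>(n::nat) s t. nonoverlapping {..<n} c d s t \<and>
      (\<Sum>k<n. t k - s k) < \<delta>2 \<longrightarrow> (\<Sum>k<n. norm (g (t k) - g (s k))) < e / (2 * K')"
    using g e' unfolding abs_cont_on_iff_nonoverlapping by blast
  show "\<exists>\<delta>>0. \<forall>(n::nat) s t. nonoverlapping {..<n} c d s t \<and> (\<Sum>k<n. t k - s k) < \<delta>
      \<longrightarrow> (\<Sum>k<n. norm (F (t k) - F (s k))) < e"
  proof (intro exI[of _ "min \<delta>1 \<delta>2"] conjI allI impI)
    fix n :: nat and s t :: "nat \<Rightarrow> real"
    assume A: "nonoverlapping {..<n} c d s t \<and> (\<Sum>k<n. t k - s k) < min \<delta>1 \<delta>2"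
    have "(\<Sum>k<n. norm (F (t k) - F (s k))) \<le> (\<Sum>k<n. K' * (\<bar>f (t k) - f (s k)\<bar> + \<bar>g (t k) - g (s k)\<bar>))"
    proof (rule sum_mono)
      fix k assume "k \<in> {..<n}"
      then have "\<bar>F (t k) - F (s k)\<bar> \<le> K * (\<bar>f (t k) - f (s k)\<bar> + \<bar>g (t k) - g (s k)\<bar>)"
        using A K unfolding nonoverlapping_def by auto
      also have "\<dots> \<le> K' * (\<bar>f (t k) - f (s k)\<bar> + \<bar>g (t k) - g (s k)\<bar>)"
        unfolding K'_def by (rule mult_right_mono) auto
      finally show "norm (F (t k) - F (s k)) \<le> K' * (\<bar>f (t k) - f (s k)\<bar> + \<bar>g (t k) - g (s k)\<bar>)"
        by simp
    qed
    also have "\<dots> = K' * (\<Sum>k<n. norm (f (t k) - f (s k))) + K' * (\<Sum>k<n. norm (g (t k) - g (s k)))"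
      by (simp add: sum_distrib_left sum.distrib distrib_left)
    also have "\<dots> < K' * (e / (2 * K')) + K' * (e / (2 * K'))"
    proof -
      have "(\<Sum>k<n. norm (f (t k) - f (s k))) < e / (2 * K')" "(\<Sum>k<n. norm (g (t k) - g (s k))) < e / (2 * K')"
        using H1 H2 A by auto
      then show ?thesis using K' by (intro add_strict_mono mult_strict_left_mono)
    qed
    also have "\<dots> = e" using K' by (simp add: field_simps)
    finally show "(\<Sum>k<n. norm (F (t k) - F (s k))) < e" .
  qed (use d1 d2 in simp)
qed

lemma abs_cont_on_diff:
  fixes f g :: "real \<Rightarrow> real"
  assumes "abs_cont_on c d f" "abs_cont_on c d g"
  shows "abs_cont_on c d (\<lambda>x. f x - g x)"
proof (rule abs_cont_on_lipschitz_comb[OF assms, where K = 1])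
  fix s t
  have "f t - g t - (f s - g s) = (f t - f s) - (g t - g s)" by simp
  then show "\<bar>f t - g t - (f s - g s)\<bar> \<le> 1 * (\<bar>f t - f s\<bar> + \<bar>g t - g s\<bar>)"
    using abs_triangle_ineq4[of "f t - f s" "g t - g s"] by simp
qed

lemma abs_cont_on_mult:
  fixes f g :: "real \<Rightarrow> real"
  assumes f: "abs_cont_on c d f" and g: "abs_cont_on c d g"
  shows "abs_cont_on c d (\<lambda>x. f x * g x)"
proof -
  obtain Bf where Bf: "Bf \<ge> 0" "\<And>x. x \<in> {c..d} \<Longrightarrow> norm (f x) \<le> Bf"
    using continuous_on_compact_bound[OF compact_Icc abs_cont_on_imp_continuous_on[OF f]] by blast
  obtain Bg where Bg: "Bg \<ge> 0" "\<And>x. x \<in> {c..d} \<Longrightarrow> norm (g x) \<le> Bg"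
    using continuous_on_compact_bound[OF compact_Icc abs_cont_on_imp_continuous_on[OF g]] by blast
  define B where "B = max Bf Bg"
  have B: "\<bar>f x\<bar> \<le> B" "\<bar>g x\<bar> \<le> B" if "x \<in> {c..d}" for x
    using Bf(2)[OF that] Bg(2)[OF that] unfolding B_def by auto
  show ?thesis
  proof (rule abs_cont_on_lipschitz_comb[OF f g, where K = B])
    fix s t assume st: "c \<le> s" "s \<le> t" "t \<le> d"
    have "f t * g t - f s * g s = (f t - f s) * g t + f s * (g t - g s)" by (simp add: algebra_simps)
    then have "\<bar>f t * g t - f s * g s\<bar> \<le> \<bar>f t - f s\<bar> * \<bar>g t\<bar> + \<bar>f s\<bar> * \<bar>g t - g s\<bar>"
      by (simp add: abs_mult[symmetric] abs_triangle_ineq)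
    also have "\<dots> \<le> \<bar>f t - f s\<bar> * B + B * \<bar>g t - g s\<bar>"
    proof -
      have "\<bar>g t\<bar> \<le> B" "\<bar>f s\<bar> \<le> B" using B st by auto
      then show ?thesis by (intro add_mono mult_left_mono mult_right_mono) auto
    qed
    finally show "\<bar>f t * g t - f s * g s\<bar> \<le> B * (\<bar>f t - f s\<bar> + \<bar>g t - g s\<bar>)"
      by (simp add: algebra_simps)
  qed
qed

lemma abs_cont_on_inverse:
  fixes g :: "real \<Rightarrow> real"
  assumes g: "abs_cont_on c d g" and nz: "\<forall>x\<in>{c..d}. g x \<noteq> 0"
  shows "abs_cont_on c d (\<lambda>x. 1 / g x)"
proof -
  obtain m where m: "m > 0" "\<forall>x\<in>{c..d}. m \<le> \<bar>g x\<bar>"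
  proof (cases "c \<le> d")
    case True
    have "continuous_on {c..d} (\<lambda>x. \<bar>g x\<bar>)"
      using abs_cont_on_imp_continuous_on[OF g] by (intro continuous_intros)
    then obtain x0 where "x0 \<in> {c..d}" "\<forall>x\<in>{c..d}. \<bar>g x0\<bar> \<le> \<bar>g x\<bar>"
      using continuous_attains_inf[of "{c..d}" "\<lambda>x. \<bar>g x\<bar>"] True by auto
    then show ?thesis using that[of "\<bar>g x0\<bar>"] nz by auto
  qed (use that[of 1] in auto)
  show ?thesis
  proof (rule abs_cont_on_lipschitz_comb[OF g g, where K = "1 / (m * m)"])
    fix s t assume st: "c \<le> s" "s \<le> t" "t \<le> d"
    have gs: "m \<le> \<bar>g s\<bar>" and gt: "m \<le> \<bar>g t\<bar>" using m st by auto
    have "\<bar>1 / g t - 1 / g s\<bar> = \<bar>g t - g s\<bar> / (\<bar>g t\<bar> * \<bar>g s\<bar>)"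
      using gs gt m by (simp add: field_simps abs_mult abs_minus_commute)
    also have "\<dots> \<le> \<bar>g t - g s\<bar> / (m * m)"
      using gs gt m by (intro divide_left_mono mult_mono) auto
    also have "\<dots> = 1 / (m * m) * \<bar>g t - g s\<bar>" by simp
    also have "\<dots> \<le> 1 / (m * m) * (\<bar>g t - g s\<bar> + \<bar>g t - g s\<bar>)"
      using m by (intro mult_left_mono) auto
    finally show "\<bar>1 / g t - 1 / g s\<bar> \<le> 1 / (m * m) * (\<bar>g t - g s\<bar> + \<bar>g t - g s\<bar>)" .
  qed
qed

lemma abs_cont_on_divide:
  fixes f g :: "real \<Rightarrow> real"
  assumes "abs_cont_on c d f" "abs_cont_on c d g" "\<forall>x\<in>{c..d}. g x \<noteq> 0"
  shows "abs_cont_on c d (\<lambda>x. f x / g x)"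
  using abs_cont_on_mult[OF assms(1) abs_cont_on_inverse[OF assms(2,3)]] by simp

lemma AC_loc_mult:
  fixes f g :: "real \<Rightarrow> real"
  shows "AC_loc I f \<Longrightarrow> AC_loc I g \<Longrightarrow> AC_loc I (\<lambda>x. f x * g x)"
  unfolding AC_loc_def using abs_cont_on_mult by blast

lemma AC_loc_diff:
  fixes f g :: "real \<Rightarrow> real"
  shows "AC_loc I f \<Longrightarrow> AC_loc I g \<Longrightarrow> AC_loc I (\<lambda>x. f x - g x)"
  unfolding AC_loc_def using abs_cont_on_diff by blast

lemma AC_loc_abs_cont_on:
  fixes f :: "real \<Rightarrow> real"
  shows "AC_loc I f \<Longrightarrow> s \<in> I \<Longrightarrow> t \<in> I \<Longrightarrow> s \<le> t \<Longrightarrow> abs_cont_on s t f"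
  unfolding AC_loc_def by blast

lemma AE_ivl_restrict:
  assumes "AE x in lebesgue. x \<in> ivl a b \<longrightarrow> P x" "s \<in> ivl a b" "t \<in> ivl a b"
  shows "AE x in lebesgue. x \<in> {s..t} \<longrightarrow> P x"
  using assms(1) by (rule eventually_mono) (use atLeastAtMost_subset_ivl[OF assms(2,3)] in auto)

lemma L1_loc_add: "L1_loc I f \<Longrightarrow> L1_loc I g \<Longrightarrow> L1_loc I (\<lambda>x. f x + g x)"
  unfolding L1_loc_def by (auto intro: set_integral_add)

lemma L1_loc_cmult: "L1_loc I f \<Longrightarrow> L1_loc I (\<lambda>x. k * f x)"
  unfolding L1_loc_def by (auto intro: set_integrable_mult_right)

lemma L1_loc_abs: "L1_loc I f \<Longrightarrow> L1_loc I (\<lambda>x. \<bar>f x\<bar>)"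
  unfolding L1_loc_def by (auto intro: set_integrable_abs)

lemma L1_loc_continuous_mult_absolutely_integrable:
  fixes h k :: "real \<Rightarrow> real"
  assumes "L1_loc (ivl a b) k" "s \<in> ivl a b" "t \<in> ivl a b" "continuous_on {s..t} h"
  shows "(\<lambda>x. h x * k x) absolutely_integrable_on {s..t}"
proof (cases "s \<le> t")
  case True
  have k: "k absolutely_integrable_on {s..t}" using assms True unfolding L1_loc_def by blast
  have "h \<in> borel_measurable (lebesgue_on {s..t})"
    using continuous_imp_measurable_on_sets_lebesgue[OF assms(4)] by simp
  moreover have "bounded (h ` {s..t})"
    using compact_continuous_image[OF assms(4)] compact_imp_bounded by blast
  ultimately show ?thesis using absolutely_integrable_bounded_measurable_product_real k by simp
qed simp

lemma integral_nonneg_AE_absolutely_integrable: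
  fixes k :: "real \<Rightarrow> real"
  assumes "k absolutely_integrable_on S" "AE x in lebesgue. x \<in> S \<longrightarrow> 0 \<le> k x"
  shows "integral S k \<ge> 0"
proof -
  have "0 \<le> set_lebesgue_integral lebesgue S k"
    unfolding set_lebesgue_integral_def
    by (rule integral_nonneg_AE) (use assms(2) in \<open>auto elim!: eventually_mono simp: indicator_def\<close>)
  then show ?thesis using set_lebesgue_integral_eq_integral(2)[OF assms(1)] by simp
qed

lemma integral_pos_AE_absolutely_integrable:
  fixes k :: "real \<Rightarrow> real"
  assumes "k absolutely_integrable_on {s..t}" "s < t" "AE x in lebesgue. x \<in> {s..t} \<longrightarrow> 0 < k x"
  shows "integral {s..t} k > 0"
proof -
  let ?g = "\<lambda>x. indicator {s..t} x *\<^sub>R k x"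
  have gi: "integrable lebesgue ?g" using assms(1) unfolding set_integrable_def .
  have nn: "AE x in lebesgue. 0 \<le> ?g x"
    using assms(3) by (auto elim!: eventually_mono simp: indicator_def)
  have "AE x in lebesgue. x \<in> {s..t} \<longrightarrow> 0 \<le> k x" using assms(3) by (rule eventually_mono) auto
  then have ge: "integral {s..t} k \<ge> 0" using integral_nonneg_AE_absolutely_integrable[OF assms(1)] by blast
  have "integral {s..t} k \<noteq> 0"
  proof
    assume "integral {s..t} k = 0"
    then have "integral\<^sup>L lebesgue ?g = 0"
      using set_lebesgue_integral_eq_integral(2)[OF assms(1)] unfolding set_lebesgue_integral_def by simp
    then have "AE x in lebesgue. ?g x = 0" using integral_nonneg_eq_0_iff_AE[OF gi nn] by simp
    then have "AE x in lebesgue. x \<notin> {s..t}" using assms(3) by eventually_elim (auto simp: indicator_def)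
    then have "{s..t} \<in> null_sets lebesgue" by (subst AE_iff_null_sets) auto
    then have "emeasure lebesgue {s..t} = 0" by auto
    then show False using assms(2) by simp
  qed
  then show ?thesis using ge by simp
qed

lemma integral_abs_le_mult_integral:
  fixes f R :: "real \<Rightarrow> real"
  assumes "f integrable_on {s..t}" "R integrable_on {y..y1}" "{s..t} \<subseteq> {y..y1}"
    "\<forall>x\<in>{y..y1}. R x \<ge> 0" "\<forall>x\<in>{s..t}. \<bar>f x\<bar> \<le> K * R x" "K \<ge> 0"
  shows "\<bar>integral {s..t} f\<bar> \<le> K * integral {y..y1} R"
proof (cases "s \<le> t")
  case False
  then show ?thesis using assms(4,6) integral_nonneg[OF assms(2)] by simp
next
  case True
  have Rst: "R integrable_on {s..t}" using integrable_on_subinterval[OF assms(2,3)] .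
  have "\<bar>integral {s..t} f\<bar> \<le> integral {s..t} (\<lambda>x. K * R x)"
    using integral_norm_bound_integral[OF assms(1) integrable_cmul[OF Rst, of K]] assms(5) by simp
  also have "\<dots> \<le> K * integral {y..y1} R"
    using integral_subset_le[OF assms(3) Rst assms(2,4)] assms(6) by (simp add: mult_left_mono)
  finally show ?thesis .
qed

lemma abs_cont_on_diff_eq_integral:
  fixes F k :: "real \<Rightarrow> real"
  assumes "abs_cont_on s t F" "s \<le> t" "k absolutely_integrable_on {s..t}"
    and "AE x in lebesgue. x \<in> {s..t} \<longrightarrow> (F has_real_derivative k x) (at x)"
  shows "F t - F s = integral {s..t} k"
proof -
  have "(k has_integral (F t - F s)) {s..t}"
    using abs_cont_on_has_integral_derivative[OF assms(2,1) _ assms(4)]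
      set_lebesgue_integral_eq_integral(1)[OF assms(3)] by blast
  then show ?thesis by (simp add: integral_unique)
qed

lemma quasi_quotient_has_real_derivative:
  fixes f g :: "real \<Rightarrow> real"
  assumes "(f has_real_derivative f1 / p) (at x)" "(g has_real_derivative g1 / p) (at x)"
    and "g x \<noteq> 0" "p \<noteq> 0"
  shows "((\<lambda>x. f x / g x) has_real_derivative (f1 * g x - f x * g1) / (g x * g x) * (1 / p)) (at x)"
proof -
  have "((\<lambda>x. f x / g x) has_real_derivative ((f1 / p) * g x - f x * (g1 / p)) / (g x * g x)) (at x)"
    using DERIV_divide[OF assms(1,2,3)] .
  moreover have "((f1 / p) * g x - f x * (g1 / p)) / (g x * g x) = (f1 * g x - f x * g1) / (g x * g x) * (1 / p)"
    using assms(3,4) by (simp add: field_simps)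
  ultimately show ?thesis by simp
qed

lemma exists_small_integral_right:
  fixes K :: "real \<Rightarrow> real"
  assumes "K integrable_on {s..d}" "s < d" "e > 0"
  obtains h where "h > 0" "s + h \<le> d" "integral {s..s + h} K < e"
proof -
  have "continuous_on {s..d} (\<lambda>t. integral {s..t} K)"
    by (rule indefinite_integral_continuous_1[OF assms(1)])
  then obtain \<delta> where \<delta>: "\<delta> > 0" "\<forall>t\<in>{s..d}. dist t s < \<delta> \<longrightarrow> dist (integral {s..t} K) (integral {s..s} K) < e"
    using assms(2,3) unfolding continuous_on_iff by (meson atLeastAtMost_iff less_imp_le order_refl)
  define h where "h = min (\<delta> / 2) (d - s)"
  have "h > 0" "s + h \<le> d" unfolding h_def using \<delta>(1) assms(2) by auto
  moreover have "dist (s + h) s < \<delta>" "s + h \<in> {s..d}"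
    using \<delta>(1) \<open>h > 0\<close> \<open>s + h \<le> d\<close> unfolding h_def by (auto simp: dist_real_def)
  then have "integral {s..s + h} K < e"
    using \<delta>(2)[rule_format, of "s + h"] by (simp add: dist_real_def)
  ultimately show ?thesis using that by blast
qed

lemma isCont_zero_from_left:
  fixes g :: "real \<Rightarrow> real"
  assumes "isCont g s" "x0 < s" "\<And>t. x0 \<le> t \<Longrightarrow> t < s \<Longrightarrow> g t = 0"
  shows "g s = 0"
proof -
  have "(g \<longlongrightarrow> g s) (at_left s)" using assms(1) by (simp add: isCont_def filterlim_at_split)
  moreover have "eventually (\<lambda>t. g t = 0) (at_left s)"
    unfolding eventually_at_left[OF assms(2)] by (intro exI[of _ x0] conjI assms(2)) (auto intro: assms(3))
  then have "(g \<longlongrightarrow> 0) (at_left s)" by (rule tendsto_eventually)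
  ultimately show ?thesis using tendsto_unique[OF trivial_limit_at_left_real] by blast
qed

lemma consecutive_zeros:
  fixes g :: "real \<Rightarrow> real"
  assumes g: "continuous_on {z0..y0} g" and t0: "z0 < t0" "t0 < y0" "g t0 \<noteq> 0"
    and zeros: "g z0 = 0" "g y0 = 0"
  obtains x1 y1 where "z0 \<le> x1" "x1 < t0" "t0 < y1" "y1 \<le> y0" "g x1 = 0" "g y1 = 0"
    "\<forall>t\<in>{x1<..<y1}. g t \<noteq> 0"
proof -
  define S1 where "S1 = {x \<in> {z0..t0}. g x = 0}"
  define S2 where "S2 = {x \<in> {t0..y0}. g x = 0}"
  have "closed S1" unfolding S1_def
    by (rule continuous_closed_preimage_constant[OF continuous_on_subset[OF g]]) (use t0 in auto)
  moreover have "closed S2" unfolding S2_def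
    by (rule continuous_closed_preimage_constant[OF continuous_on_subset[OF g]]) (use t0 in auto)
  moreover have "z0 \<in> S1" "y0 \<in> S2" using zeros t0 unfolding S1_def S2_def by auto
  moreover have "bdd_above S1" "bdd_below S2" unfolding S1_def S2_def by (auto intro: bdd_aboveI bdd_belowI)
  ultimately have S: "Sup S1 \<in> S1" "Inf S2 \<in> S2"
    using closed_contains_Sup[of S1] closed_contains_Inf[of S2] by blast+
  have "g t \<noteq> 0" if "Sup S1 < t" "t < Inf S2" for t
  proof
    assume "g t = 0"
    show False
    proof (cases "t \<le> t0")
      case True
      then have "t \<in> S1" using S(1) that \<open>g t = 0\<close> unfolding S1_def by auto
      then show False using cSup_upper[OF _ \<open>bdd_above S1\<close>, of t] that(1) by simp
    next
      case False
      then have "t \<in> S2" using S(2) that \<open>g t = 0\<close> unfolding S2_def by auto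
      then show False using cInf_lower[OF _ \<open>bdd_below S2\<close>, of t] that(2) by simp
    qed
  qed
  moreover have "Sup S1 \<noteq> t0" "Inf S2 \<noteq> t0" using S t0(3) unfolding S1_def S2_def by auto
  moreover have "z0 \<le> Sup S1" "Sup S1 \<le> t0" "g (Sup S1) = 0" "t0 \<le> Inf S2" "Inf S2 \<le> y0" "g (Inf S2) = 0"
    using S unfolding S1_def S2_def by auto
  ultimately show ?thesis using that[of "Sup S1" "Inf S2"] by auto
qed

lemma set_integral_abs_le_mult:
  fixes f g :: "real \<Rightarrow> real"
  assumes g: "set_integrable lebesgue S g" and fg: "\<And>t. t \<in> S \<Longrightarrow> \<bar>f t\<bar> \<le> C * g t"
  shows "\<bar>LINT t:S|lebesgue. f t\<bar> \<le> C * (LINT t:S|lebesgue. g t)"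
proof -
  have pw: "\<bar>indicator S t * f t\<bar> \<le> indicator S t * (C * g t)" for t
    using fg[of t] by (cases "t \<in> S") auto
  have Cg: "integrable lebesgue (\<lambda>t. indicator S t * (C * g t))"
    using integrable_mult_right[OF g[unfolded set_integrable_def], of C]
    by (simp add: mult.left_commute)
  have "\<bar>LINT t:S|lebesgue. f t\<bar> \<le> integral\<^sup>L lebesgue (\<lambda>t. \<bar>indicator S t * f t\<bar>)"
    unfolding set_lebesgue_integral_def
    using integral_norm_bound[of lebesgue "\<lambda>t. indicator S t * f t"] by simp
  also have "\<dots> \<le> integral\<^sup>L lebesgue (\<lambda>t. indicator S t * (C * g t))"
  proof (cases "integrable lebesgue (\<lambda>t. \<bar>indicator S t * f t\<bar>)")
    case True
    show ?thesis by (rule integral_mono[OF True Cg pw])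
  next
    case False
    have "0 \<le> integral\<^sup>L lebesgue (\<lambda>t. indicator S t * (C * g t))"
      by (rule integral_nonneg_AE) (use pw in \<open>auto intro: order_trans[OF abs_ge_zero]\<close>)
    then show ?thesis using not_integrable_integral_eq[OF False] by simp
  qed
  also have "\<dots> = C * (LINT t:S|lebesgue. g t)"
    unfolding set_lebesgue_integral_def by (simp add: mult.left_commute)
  finally show ?thesis .
qed

lemma norm_suminf_minus_first_le:
  fixes A :: "nat \<Rightarrow> 'a::banach"
  assumes bnd: "\<And>n. norm (A n) \<le> M * q ^ n" and q: "0 \<le> q" "q \<le> 1 / 2"
  shows "norm (suminf A - A 0) \<le> 2 * M * q"
proof -
  have M: "M \<ge> 0" using bnd[of 0] norm_ge_zero[of "A 0"] by (simp del: norm_ge_zero)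
  have sg: "summable (\<lambda>n. M * q ^ n)" using q by (intro summable_mult summable_geometric) auto
  have sA: "summable (\<lambda>n. norm (A n))" by (rule summable_comparison_test[OF _ sg]) (use bnd in auto)
  then have sn: "summable (\<lambda>n. norm (A (Suc n)))" by (subst summable_Suc_iff)
  have "norm (suminf A - A 0) = norm (\<Sum>n. A (Suc n))"
    using suminf_split_head[OF summable_norm_cancel[OF sA]] by simp
  also have "\<dots> \<le> (\<Sum>n. norm (A (Suc n)))" by (rule summable_norm[OF sn])
  also have "\<dots> \<le> (\<Sum>n. (M * q) * q ^ n)"
  proof (rule suminf_le[OF _ sn])
    show "norm (A (Suc n)) \<le> M * q * q ^ n" for n using bnd[of "Suc n"] by (simp add: mult.assoc)
    show "summable (\<lambda>n. M * q * q ^ n)" using q by (intro summable_mult summable_geometric) auto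
  qed
  also have "\<dots> = M * q / (1 - q)" using suminf_geometric[of q] q suminf_mult[of "\<lambda>n. q ^ n" "M * q"]
    by (simp add: summable_geometric)
  also have "\<dots> = (M * q) * (1 / (1 - q))" by simp
  also have "\<dots> \<le> (M * q) * 2"
    using M q by (intro mult_left_mono) (auto simp: field_simps)
  finally show ?thesis by simp
qed

lemma eventually_left_end_filter:
  assumes "x \<in> ivl a b"
  shows "eventually (\<lambda>t. a < ereal t \<and> t < x) (left_end_filter a)"
proof (cases a)
  case (real a')
  then have "a' < x" using assms unfolding ivl_def by simp
  then show ?thesis using real unfolding left_end_filter_def
    by (simp add: eventually_at_right[OF \<open>a' < x\<close>]) (intro exI[of _ x], auto)
next
  case PInf
  then show ?thesis using assms unfolding ivl_def by simp
next
  case MInf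
  then show ?thesis unfolding left_end_filter_def by (simp add: eventually_at_bot_linorder)
qed

lemma left_end_filter_neq_bot: "left_end_filter a \<noteq> bot"
  unfolding left_end_filter_def by simp

lemma sets_lebesgue_left_segment: "{t. a < ereal t \<and> t < y} \<in> sets lebesgue"
proof -
  have "open {t. a < ereal t \<and> t < y}"
  proof (cases a)
    case (real a')
    then have "{t. a < ereal t \<and> t < y} = {a'<..<y}" by auto
    then show ?thesis by simp
  next
    case MInf
    then have "{t. a < ereal t \<and> t < y} = {..<y}" by auto
    then show ?thesis by simp
  qed simp
  then show ?thesis by (simp add: borel_open)
qed

lemma tendsto_set_integral_left_segment_sequentially:
  fixes g :: "real \<Rightarrow> real"
  assumes int: "set_integrable lebesgue {x. a < ereal x \<and> x < c} g"
    and X: "\<And>t. a < ereal t \<Longrightarrow> eventually (\<lambda>n. X n \<le> t) sequentially"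
    and ac: "a < ereal c"
  shows "(\<lambda>n. LINT t:{t. a < ereal t \<and> t < X n}|lebesgue. g t) \<longlonglongrightarrow> 0"
proof -
  define Y where "Y n = min (X n) c" for n
  define S where "S n t = indicator {t. a < ereal t \<and> t < Y n} t *\<^sub>R g t" for n t
  define W where "W t = indicator {x. a < ereal x \<and> x < c} t *\<^sub>R \<bar>g t\<bar>" for t
  have "(\<lambda>n. integral\<^sup>L lebesgue (S n)) \<longlonglongrightarrow> integral\<^sup>L lebesgue (\<lambda>t::real. 0::real)"
  proof (rule integral_dominated_convergence)
    show "S n \<in> borel_measurable lebesgue" for n
    proof -
      have "set_integrable lebesgue {t. a < ereal t \<and> t < Y n} g"
        by (rule set_integrable_subset[OF int sets_lebesgue_left_segment]) (auto simp: Y_def)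
      then show ?thesis unfolding set_integrable_def S_def by blast
    qed
    have "W = (\<lambda>x. norm (indicator {x. a < ereal x \<and> x < c} x *\<^sub>R g x))"
      by (auto simp: W_def indicator_def)
    then show "integrable lebesgue W" using integrable_norm[OF int[unfolded set_integrable_def]] by simp
    show "AE x in lebesgue. norm (S n x) \<le> W x" for n
      by (rule AE_I2) (auto simp: S_def W_def Y_def indicator_def)
    show "AE x in lebesgue. (\<lambda>n. S n x) \<longlonglongrightarrow> 0"
    proof (rule AE_I2)
      fix x
      show "(\<lambda>n. S n x) \<longlonglongrightarrow> 0"
      proof (cases "a < ereal x")
        case True
        have "eventually (\<lambda>n. S n x = 0) sequentially"
          using X[OF True] by eventually_elim (auto simp: S_def Y_def indicator_def)
        then show ?thesis by (rule tendsto_eventually)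
      qed (simp add: S_def indicator_def)
    qed
  qed simp
  then have "(\<lambda>n. LINT t:{t. a < ereal t \<and> t < Y n}|lebesgue. g t) \<longlonglongrightarrow> 0"
    unfolding set_lebesgue_integral_def S_def by simp
  moreover have "eventually (\<lambda>n. (LINT t:{t. a < ereal t \<and> t < Y n}|lebesgue. g t) =
                  (LINT t:{t. a < ereal t \<and> t < X n}|lebesgue. g t)) sequentially"
    using X[OF ac] by eventually_elim (simp add: Y_def min_def)
  ultimately show ?thesis by (rule Lim_transform_eventually)
qed

lemma tendsto_set_integral_left_segment:
  fixes g :: "real \<Rightarrow> real"
  assumes int: "set_integrable lebesgue {x. a < ereal x \<and> x < c} g" and c: "c \<in> ivl a b"
  shows "((\<lambda>x. LINT t:{t. a < ereal t \<and> t < x}|lebesgue. g t) \<longlongrightarrow> 0) (left_end_filter a)"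
proof -
  have ac: "a < ereal c" using c unfolding ivl_def by auto
  show ?thesis
  proof (cases a)
    case MInf
    have "((\<lambda>x. LINT t:{t. a < ereal t \<and> t < x}|lebesgue. g t) \<longlongrightarrow> 0) at_bot"
    proof (rule tendsto_at_botI_sequentially)
      fix X :: "nat \<Rightarrow> real" assume "filterlim X at_bot sequentially"
      then show "(\<lambda>n. LINT t:{t. a < ereal t \<and> t < X n}|lebesgue. g t) \<longlonglongrightarrow> 0"
        by (intro tendsto_set_integral_left_segment_sequentially[OF int _ ac])
           (simp add: filterlim_at_bot)
    qed
    then show ?thesis using MInf by (simp add: left_end_filter_def)
  next
    case (real a')
    have a'c: "a' < c" using ac real by simp
    have "((\<lambda>x. LINT t:{t. a < ereal t \<and> t < x}|lebesgue. g t) \<longlongrightarrow> 0) (at_right a')"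
    proof (rule tendsto_at_right_sequentially[OF a'c])
      fix S :: "nat \<Rightarrow> real" assume S: "S \<longlonglongrightarrow> a'"
      show "(\<lambda>n. LINT t:{t. a < ereal t \<and> t < S n}|lebesgue. g t) \<longlonglongrightarrow> 0"
      proof (rule tendsto_set_integral_left_segment_sequentially[OF int _ ac])
        fix t assume "a < ereal t"
        then have "eventually (\<lambda>n. S n < t) sequentially" using order_tendstoD(2)[OF S] real by simp
        then show "eventually (\<lambda>n. S n \<le> t) sequentially" by eventually_elim simp
      qed
    qed
    then show ?thesis using real by (simp add: left_end_filter_def)
  qed (use ac in simp)
qed

section \<open>Solutions of tau f = z f\<close>

lemma is_solD_real:
  assumes "is_sol a b p q r (z::real) f f1"
  shows "AC_loc (ivl a b) f" "AC_loc (ivl a b) f1"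
    "AE x in lebesgue. x \<in> ivl a b \<longrightarrow> (f has_real_derivative f1 x / p x) (at x)"
    "AE x in lebesgue. x \<in> ivl a b \<longrightarrow> (f1 has_real_derivative (q x - z * r x) * f x) (at x)"
  using assms unfolding is_sol_def by (simp_all add: has_real_derivative_iff_has_vector_derivative)

lemma SL_coeffsD:
  assumes "SL_coeffs a b p q r"
  shows "AE x in lebesgue. x \<in> ivl a b \<longrightarrow> p x > 0" "L1_loc (ivl a b) r"
    "L1_loc (ivl a b) (\<lambda>x. 1 / p x)" "L1_loc (ivl a b) (\<lambda>x. q x - z * r x)"
proof -
  have "L1_loc (ivl a b) (\<lambda>x. q x + (- z) * r x)"
    using assms unfolding SL_coeffs_def by (intro L1_loc_add L1_loc_cmult) auto
  then show "L1_loc (ivl a b) (\<lambda>x. q x - z * r x)" by simp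
qed (use assms in \<open>auto simp: SL_coeffs_def\<close>)

lemma is_sol_has_integral:
  assumes coeffs: "SL_coeffs a b p q r" and sol: "is_sol a b p q r (z::real) f f1"
    and st: "s \<in> ivl a b" "t \<in> ivl a b" "s \<le> t"
  shows "(\<lambda>x. f1 x * (1 / p x)) absolutely_integrable_on {s..t}"
    "(\<lambda>x. f x * (q x - z * r x)) absolutely_integrable_on {s..t}"
    "f t - f s = integral {s..t} (\<lambda>x. f1 x * (1 / p x))"
    "f1 t - f1 s = integral {s..t} (\<lambda>x. f x * (q x - z * r x))"
proof -
  note f = is_solD_real[OF sol]
  note L1 = SL_coeffsD(3,4)[OF coeffs]
  show i1: "(\<lambda>x. f1 x * (1 / p x)) absolutely_integrable_on {s..t}"
    by (rule L1_loc_continuous_mult_absolutely_integrable[OF L1(1) st(1,2)])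
       (rule AC_loc_imp_continuous_on[OF f(2) st(1,2)])
  show i2: "(\<lambda>x. f x * (q x - z * r x)) absolutely_integrable_on {s..t}"
    by (rule L1_loc_continuous_mult_absolutely_integrable[OF L1(2) st(1,2)])
       (rule AC_loc_imp_continuous_on[OF f(1) st(1,2)])
  show "f t - f s = integral {s..t} (\<lambda>x. f1 x * (1 / p x))"
    by (rule abs_cont_on_diff_eq_integral[OF AC_loc_abs_cont_on[OF f(1) st] st(3) i1])
       (use AE_ivl_restrict[OF f(3) st(1,2)] in simp)
  show "f1 t - f1 s = integral {s..t} (\<lambda>x. f x * (q x - z * r x))"
    by (rule abs_cont_on_diff_eq_integral[OF AC_loc_abs_cont_on[OF f(2) st] st(3) i2])
       (use AE_ivl_restrict[OF f(4) st(1,2)] in \<open>simp add: mult.commute\<close>)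
qed

lemma wronskian_has_real_derivative:
  fixes g g1 h h1 :: "real \<Rightarrow> real"
  assumes "(g has_real_derivative g1 x / P) (at x)" "(g1 has_real_derivative (Q - z1 * R) * g x) (at x)"
    and "(h has_real_derivative h1 x / P) (at x)" "(h1 has_real_derivative (Q - z2 * R) * h x) (at x)"
    and "P \<noteq> 0"
  shows "((\<lambda>x. g x * h1 x - g1 x * h x) has_real_derivative (z1 - z2) * g x * h x * R) (at x)"
proof -
  have "((\<lambda>x. g x * h1 x - g1 x * h x) has_real_derivative
      (g1 x / P * h1 x + (Q - z2 * R) * h x * g x) - ((Q - z1 * R) * g x * h x + h1 x / P * g1 x)) (at x)"
    by (intro DERIV_diff DERIV_mult assms)
  moreover have "(g1 x / P * h1 x + (Q - z2 * R) * h x * g x) - ((Q - z1 * R) * g x * h x + h1 x / P * g1 x)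
      = (z1 - z2) * g x * h x * R"
    by (simp add: algebra_simps)
  ultimately show ?thesis by simp
qed

lemma wronskian_diff_eq_integral:
  assumes coeffs: "SL_coeffs a b p q r"
    and g: "is_sol a b p q r (z1::real) g g1" and h: "is_sol a b p q r (z2::real) h h1"
    and st: "s \<in> ivl a b" "t \<in> ivl a b" "s \<le> t"
  shows "(\<lambda>x. (z1 - z2) * g x * h x * r x) absolutely_integrable_on {s..t}"
    "(g t * h1 t - g1 t * h t) - (g s * h1 s - g1 s * h s) = integral {s..t} (\<lambda>x. (z1 - z2) * g x * h x * r x)"
proof -
  note g' = is_solD_real[OF g] and h' = is_solD_real[OF h]
  note p = SL_coeffsD(1)[OF coeffs] and L1r = SL_coeffsD(2)[OF coeffs]
  show i: "(\<lambda>x. (z1 - z2) * g x * h x * r x) absolutely_integrable_on {s..t}"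
    using AC_loc_imp_continuous_on[OF g'(1) st(1,2)] AC_loc_imp_continuous_on[OF h'(1) st(1,2)]
    by (intro L1_loc_continuous_mult_absolutely_integrable[OF L1r st(1,2)] continuous_intros)
  have "AC_loc (ivl a b) (\<lambda>x. g x * h1 x - g1 x * h x)"
    by (intro AC_loc_diff AC_loc_mult g'(1,2) h'(1,2))
  moreover have "AE x in lebesgue. x \<in> {s..t} \<longrightarrow>
      ((\<lambda>x. g x * h1 x - g1 x * h x) has_real_derivative (z1 - z2) * g x * h x * r x) (at x)"
    using AE_ivl_restrict[OF g'(3) st(1,2)] AE_ivl_restrict[OF g'(4) st(1,2)]
      AE_ivl_restrict[OF h'(3) st(1,2)] AE_ivl_restrict[OF h'(4) st(1,2)] AE_ivl_restrict[OF p st(1,2)]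
    by eventually_elim (auto intro: wronskian_has_real_derivative)
  ultimately show "(g t * h1 t - g1 t * h t) - (g s * h1 s - g1 s * h s)
      = integral {s..t} (\<lambda>x. (z1 - z2) * g x * h x * r x)"
    using abs_cont_on_diff_eq_integral[OF AC_loc_abs_cont_on[OF _ st] st(3) i] by blast
qed

lemma is_sol_zero_data_bound:
  assumes coeffs: "SL_coeffs a b p q r" and sol: "is_sol a b p q r (z::real) f f1"
    and s: "s \<in> ivl a b" "f s = 0" "f1 s = 0" and s1: "s1 \<in> ivl a b"
    and M: "\<forall>x\<in>{s..s1}. \<bar>f x\<bar> \<le> M \<and> \<bar>f1 x\<bar> \<le> M" "M \<ge> 0"
  defines "K \<equiv> \<lambda>x. \<bar>1 / p x\<bar> + \<bar>q x - z * r x\<bar>"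
  assumes t: "t \<in> {s..s1}"
  shows "\<bar>f t\<bar> + \<bar>f1 t\<bar> \<le> 2 * M * integral {s..s1} K"
proof -
  have tI: "t \<in> ivl a b" and st: "s \<le> t" "{s..t} \<subseteq> {s..s1}" using ivl_convex[OF s(1) s1] t by auto
  note I = is_sol_has_integral[OF coeffs sol s(1) tI st(1)]
  have "L1_loc (ivl a b) K" unfolding K_def by (intro L1_loc_add L1_loc_abs SL_coeffsD[OF coeffs])
  then have Ki: "K integrable_on {s..s1}"
    using s(1) s1 t unfolding L1_loc_def by (auto simp: set_lebesgue_integral_eq_integral(1))
  have K0: "\<forall>x\<in>{s..s1}. 0 \<le> K x" unfolding K_def by simp
  have "\<bar>f t\<bar> = \<bar>integral {s..t} (\<lambda>x. f1 x * (1 / p x))\<bar>" using I(3) s(2) by simp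
  also have "\<dots> \<le> M * integral {s..s1} K"
  proof (rule integral_abs_le_mult_integral[OF _ Ki st(2) K0 _ M(2)])
    show "(\<lambda>x. f1 x * (1 / p x)) integrable_on {s..t}"
      using I(1) set_lebesgue_integral_eq_integral(1) by blast
    show "\<forall>x\<in>{s..t}. \<bar>f1 x * (1 / p x)\<bar> \<le> M * K x"
    proof
      fix x assume "x \<in> {s..t}"
      then have "\<bar>f1 x\<bar> \<le> M" using M(1) st(2) by blast
      then show "\<bar>f1 x * (1 / p x)\<bar> \<le> M * K x" unfolding K_def abs_mult by (intro mult_mono) auto
    qed
  qed
  moreover have "\<bar>f1 t\<bar> = \<bar>integral {s..t} (\<lambda>x. f x * (q x - z * r x))\<bar>" using I(4) s(3) by simp
  moreover have "\<dots> \<le> M * integral {s..s1} K"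
  proof (rule integral_abs_le_mult_integral[OF _ Ki st(2) K0 _ M(2)])
    show "(\<lambda>x. f x * (q x - z * r x)) integrable_on {s..t}"
      using I(2) set_lebesgue_integral_eq_integral(1) by blast
    show "\<forall>x\<in>{s..t}. \<bar>f x * (q x - z * r x)\<bar> \<le> M * K x"
    proof
      fix x assume "x \<in> {s..t}"
      then have "\<bar>f x\<bar> \<le> M" using M(1) st(2) by blast
      then show "\<bar>f x * (q x - z * r x)\<bar> \<le> M * K x" unfolding K_def abs_mult by (intro mult_mono) auto
    qed
  qed
  ultimately show ?thesis by linarith
qed

text \<open>Gronwall-type argument: on a short interval [s, s + h] the bound above turns the maximum of
  |f| + |f1| into at most half of itself.\<close>
lemma is_sol_zero_data_imp_zero_locally:
  assumes coeffs: "SL_coeffs a b p q r" and sol: "is_sol a b p q r (z::real) f f1"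
    and s: "s \<in> ivl a b" "f s = 0" "f1 s = 0"
  obtains h where "h > 0" "s + h \<in> ivl a b" "\<forall>t\<in>{s..s + h}. f t = 0 \<and> f1 t = 0"
proof -
  obtain c' d where d': "c' \<in> ivl a b" "d \<in> ivl a b" "c' < s" "s < d" using ivl_around[OF s(1)] .
  note d = d'(2,4)
  let ?K = "\<lambda>x. \<bar>1 / p x\<bar> + \<bar>q x - z * r x\<bar>"
  have "L1_loc (ivl a b) ?K" by (intro L1_loc_add L1_loc_abs SL_coeffsD[OF coeffs])
  then have Ki: "?K integrable_on {s..d}"
    using s(1) d unfolding L1_loc_def by (auto simp: set_lebesgue_integral_eq_integral(1))
  have "(1::real) / 4 > 0" by simp
  then obtain h where h: "h > 0" "s + h \<le> d" "integral {s..s + h} ?K < 1 / 4"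
    using exists_small_integral_right[OF Ki d(2)] by blast
  have shI: "s + h \<in> ivl a b" using ivl_convex[OF s(1) d(1)] h by simp
  define m where "m t = \<bar>f t\<bar> + \<bar>f1 t\<bar>" for t
  have "continuous_on {s..s + h} m" unfolding m_def
    using AC_loc_imp_continuous_on[OF is_solD_real(1)[OF sol] s(1) shI]
      AC_loc_imp_continuous_on[OF is_solD_real(2)[OF sol] s(1) shI] by (intro continuous_intros)
  then obtain ts where ts: "ts \<in> {s..s + h}" "\<forall>t\<in>{s..s + h}. m t \<le> m ts"
    using continuous_attains_sup[OF compact_Icc _ \<open>continuous_on {s..s + h} m\<close>] h(1) by auto
  have "\<forall>x\<in>{s..s + h}. \<bar>f x\<bar> \<le> m ts \<and> \<bar>f1 x\<bar> \<le> m ts"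
    using ts(2) unfolding m_def by (smt (verit, best) abs_ge_zero)
  moreover have "0 \<le> m ts" unfolding m_def by simp
  ultimately have "m ts \<le> 2 * m ts * integral {s..s + h} ?K"
    using is_sol_zero_data_bound[OF coeffs sol s shI _ _ ts(1)] unfolding m_def by blast
  also have "\<dots> \<le> 2 * m ts * (1 / 4)"
    using h(3) by (intro mult_left_mono) (auto simp: m_def)
  finally have "m ts \<le> 0" by simp
  then have "\<forall>t\<in>{s..s + h}. f t = 0 \<and> f1 t = 0" using ts(2) unfolding m_def by fastforce
  then show ?thesis using that h(1) shI by blast
qed

lemma is_sol_zero_data_imp_zero:
  assumes coeffs: "SL_coeffs a b p q r" and sol: "is_sol a b p q r (z::real) f f1"
    and x0: "x0 \<in> ivl a b" "f x0 = 0" "f1 x0 = 0" and x2: "x2 \<in> ivl a b" "x0 \<le> x2"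
  shows "f x2 = 0"
proof -
  define T where "T = {x. x0 \<le> x \<and> x \<le> x2 \<and> (\<forall>t\<in>{x0..x}. f t = 0 \<and> f1 t = 0)}"
  have x0T: "x0 \<in> T" unfolding T_def using x0 x2 by auto
  have bdd: "bdd_above T" unfolding T_def by (auto intro: bdd_aboveI[of _ x2])
  define s where "s = Sup T"
  have s: "x0 \<le> s" "s \<le> x2" unfolding s_def
    by (rule cSup_upper[OF x0T bdd], rule cSup_least) (use x0T T_def in auto)
  have sI: "s \<in> ivl a b" using ivl_convex[OF x0(1) x2(1) s] .
  have below: "f t = 0 \<and> f1 t = 0" if t: "x0 \<le> t" "t < s" for t
  proof -
    obtain x where "x \<in> T" "t < x" using t(2) less_cSup_iff[OF _ bdd, of t] x0T unfolding s_def by auto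
    then show ?thesis using t unfolding T_def by auto
  qed
  have zs: "f s = 0 \<and> f1 s = 0"
  proof (cases "s = x0")
    case False
    then have "x0 < s" using s(1) by simp
    then show ?thesis using below
      isCont_zero_from_left[OF AC_loc_imp_isCont[OF is_solD_real(1)[OF sol] sI], of x0]
      isCont_zero_from_left[OF AC_loc_imp_isCont[OF is_solD_real(2)[OF sol] sI], of x0] by blast
  qed (use x0 in simp)
  have "s = x2"
  proof (rule ccontr)
    assume "s \<noteq> x2"
    then have sx: "s < x2" using s(2) by simp
    obtain h where h: "h > 0" "s + h \<in> ivl a b" "\<forall>t\<in>{s..s + h}. f t = 0 \<and> f1 t = 0"
      using is_sol_zero_data_imp_zero_locally[OF coeffs sol sI] zs by blast
    have "f t = 0 \<and> f1 t = 0" if "t \<in> {x0..min (s + h) x2}" for t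
      using below[of t] h(3) that by (cases "t < s") auto
    then have "min (s + h) x2 \<in> T" unfolding T_def using s sx h(1) by auto
    then have "min (s + h) x2 \<le> s" unfolding s_def using cSup_upper[OF _ bdd] by blast
    then show False using h(1) sx by simp
  qed
  then show ?thesis using zs by simp
qed

lemma is_sol_vanishing_imp_quasi_derivative_zero:
  assumes coeffs: "SL_coeffs a b p q r" and sol: "is_sol a b p q r (z::real) f f1"
    and st: "s \<in> ivl a b" "t \<in> ivl a b" "s < t" and fz: "\<forall>x\<in>{s..t}. f x = 0"
  shows "f1 s = 0"
proof -
  have const: "f1 x = f1 s" if x: "x \<in> {s..t}" for x
  proof -
    have "x \<in> ivl a b" using ivl_convex[OF st(1,2)] x by auto
    then have "f1 x - f1 s = integral {s..x} (\<lambda>y. f y * (q y - z * r y))"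
      using is_sol_has_integral(4)[OF coeffs sol st(1)] x by simp
    also have "\<dots> = integral {s..x} (\<lambda>y. 0)" by (rule integral_cong) (use fz x in auto)
    finally show ?thesis by simp
  qed
  have "0 = f t - f s" using fz st(3) by simp
  also have "\<dots> = integral {s..t} (\<lambda>x. f1 x * (1 / p x))"
    using is_sol_has_integral(3)[OF coeffs sol st(1,2)] st(3) by simp
  also have "\<dots> = integral {s..t} (\<lambda>x. f1 s * (1 / p x))"
  proof (rule integral_cong)
    fix x assume "x \<in> {s..t}"
    then show "f1 x * (1 / p x) = f1 s * (1 / p x)" by (simp only: const)
  qed
  also have "\<dots> = f1 s * integral {s..t} (\<lambda>x. 1 / p x)" by (rule integral_mult_right)
  finally have eq: "f1 s * integral {s..t} (\<lambda>x. 1 / p x) = 0" by simp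
  have "integral {s..t} (\<lambda>x. 1 / p x) > 0"
  proof (rule integral_pos_AE_absolutely_integrable[OF _ st(3)])
    show "(\<lambda>x. 1 / p x) absolutely_integrable_on {s..t}"
      using SL_coeffsD(3)[OF coeffs] st unfolding L1_loc_def by auto
    show "AE x in lebesgue. x \<in> {s..t} \<longrightarrow> 0 < 1 / p x"
      using AE_ivl_restrict[OF SL_coeffsD(1)[OF coeffs] st(1,2)] by (rule eventually_mono) auto
  qed
  then show ?thesis using eq by simp
qed

lemma is_sol_vanishing_near_left_end:
  assumes coeffs: "SL_coeffs a b p q r" and sol: "is_sol a b p q r (z::real) f f1"
    and w: "w \<in> ivl a b" "\<forall>t. a < ereal t \<and> t < w \<longrightarrow> f t = 0"
  shows "\<forall>x\<in>ivl a b. f x = 0"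
proof
  fix x assume xI: "x \<in> ivl a b"
  have "a < ereal w" using w(1) unfolding ivl_def by simp
  then obtain s where s: "a < ereal s" "ereal s < ereal w" using ereal_dense2 by blast
  define t where "t = (s + w) / 2"
  have st: "s < t" "t < w" using s(2) unfolding t_def by auto
  have "ereal w < b" using w(1) unfolding ivl_def by simp
  then have sI: "s \<in> ivl a b" using s less_trans[OF s(2)] unfolding ivl_def by simp
  have tI: "t \<in> ivl a b" using ivl_convex[OF sI w(1)] st by simp
  have fz: "\<forall>y\<in>{s..t}. f y = 0"
  proof
    fix y assume y: "y \<in> {s..t}"
    then have "a < ereal y" using less_le_trans[OF s(1), of "ereal y"] by simp
    then show "f y = 0" using w(2) y st by simp
  qed
  have "f1 s = 0" by (rule is_sol_vanishing_imp_quasi_derivative_zero[OF coeffs sol sI tI st(1) fz])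
  show "f x = 0"
  proof (cases "s \<le> x")
    case True
    then show ?thesis using is_sol_zero_data_imp_zero[OF coeffs sol sI _ \<open>f1 s = 0\<close> xI] fz st by auto
  next
    case False
    then show ?thesis using w(2) xI s(2) unfolding ivl_def by auto
  qed
qed

section \<open>The principal pair and the functions phi_n\<close>

locale principal_pair =
  fixes a b :: ereal and p q r u v u1 v1 :: "real \<Rightarrow> real" and lam c :: real
  assumes coeffs: "SL_coeffs a b p q r"
    and nonosc: "nonosc_at_a a b p q r lam"
    and u_sol: "is_sol a b p q r lam u u1"
    and v_sol: "is_sol a b p q r lam v v1"
    and u_principal: "principal_at_a a b p q r lam u"
    and v_nonprincipal: "lin_indep_on (ivl a b) u v"
    and wronskian: "\<forall>x\<in>ivl a b. v x * u1 x - v1 x * u x = 1"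
    and c_in: "c \<in> ivl a b"
    and integrable: "set_integrable lebesgue {x. a < ereal x \<and> x < c} (\<lambda>x. u x * v x * r x)"
begin

lemma p_pos: "AE x in lebesgue. x \<in> ivl a b \<longrightarrow> p x > 0"
  and L1_r: "L1_loc (ivl a b) r"
  and L1_inverse_p: "L1_loc (ivl a b) (\<lambda>x. 1 / p x)"
  using SL_coeffsD[OF coeffs] by auto

lemma u_AC: "AC_loc (ivl a b) u" and u1_AC: "AC_loc (ivl a b) u1"
  and u_deriv: "AE x in lebesgue. x \<in> ivl a b \<longrightarrow> (u has_real_derivative u1 x / p x) (at x)"
  using is_solD_real[OF u_sol] by auto

lemma v_AC: "AC_loc (ivl a b) v"
  and v_deriv: "AE x in lebesgue. x \<in> ivl a b \<longrightarrow> (v has_real_derivative v1 x / p x) (at x)"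
  using is_solD_real[OF v_sol] by auto

lemma continuous_on_uv:
  assumes "s \<in> ivl a b" "t \<in> ivl a b"
  shows "continuous_on {s..t} u" "continuous_on {s..t} v" "continuous_on {s..t} u1"
  using AC_loc_imp_continuous_on assms u_AC v_AC u1_AC by blast+

lemma nonzero_near_left_end:
  assumes "is_sol a b p q r lam f f1" "\<exists>x\<in>ivl a b. f x \<noteq> 0"
  shows "\<exists>c'\<in>ivl a b. \<forall>x. a < ereal x \<and> x < c' \<longrightarrow> f x \<noteq> 0"
proof -
  obtain c1 where c1: "c1 \<in> ivl a b" and fin: "finite {x. a < ereal x \<and> x < c1 \<and> f x = 0}"
    using nonosc assms unfolding nonosc_at_a_def by blast
  define Z where "Z = {x. a < ereal x \<and> x < c1 \<and> f x = 0}"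
  show ?thesis
  proof (cases "Z = {}")
    case True
    then show ?thesis using c1 unfolding Z_def by blast
  next
    case False
    have Z: "finite Z" "Min Z \<in> Z" using fin Min_in[OF _ False] unfolding Z_def by auto
    then have "a < ereal (Min Z)" "Min Z \<le> c1" unfolding Z_def by auto
    moreover have "ereal (Min Z) < b"
      using le_less_trans[of "ereal (Min Z)" "ereal c1" b] \<open>Min Z \<le> c1\<close> c1 unfolding ivl_def by simp
    ultimately have "Min Z \<in> ivl a b" unfolding ivl_def by simp
    moreover have "f x \<noteq> 0" if "a < ereal x" "x < Min Z" for x
      using Min_le[OF Z(1), of x] that \<open>Min Z \<le> c1\<close> unfolding Z_def by force
    ultimately show ?thesis by blast
  qed
qed

lemma u_nontrivial: "\<exists>x\<in>ivl a b. u x \<noteq> 0"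
  using v_nonprincipal unfolding lin_indep_on_def by (metis mult_1 mult_zero_left add_0 one_neq_zero)

lemma v_nontrivial: "\<exists>x\<in>ivl a b. v x \<noteq> 0"
  using v_nonprincipal unfolding lin_indep_on_def by (metis mult_1 mult_zero_left add_0 one_neq_zero)

lemma exists_nonzero_segment:
  "\<exists>c0. c0 \<in> ivl a b \<and> c0 \<le> c \<and> (\<forall>x. a < ereal x \<and> x < c0 \<longrightarrow> u x \<noteq> 0 \<and> v x \<noteq> 0)"
proof -
  obtain cu where cu: "cu \<in> ivl a b" "\<forall>x. a < ereal x \<and> x < cu \<longrightarrow> u x \<noteq> 0"
    using nonzero_near_left_end[OF u_sol u_nontrivial] by blast
  obtain cv where cv: "cv \<in> ivl a b" "\<forall>x. a < ereal x \<and> x < cv \<longrightarrow> v x \<noteq> 0"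
    using nonzero_near_left_end[OF v_sol v_nontrivial] by blast
  have "min c (min cu cv) \<in> ivl a b" using c_in cu(1) cv(1) by (auto simp: min_def)
  then show ?thesis using cu(2) cv(2) by (intro exI[of _ "min c (min cu cv)"]) auto
qed

definition c0 :: real where
  "c0 = (SOME c0. c0 \<in> ivl a b \<and> c0 \<le> c \<and> (\<forall>x. a < ereal x \<and> x < c0 \<longrightarrow> u x \<noteq> 0 \<and> v x \<noteq> 0))"

lemma c0: "c0 \<in> ivl a b" "c0 \<le> c" "\<And>x. a < ereal x \<Longrightarrow> x < c0 \<Longrightarrow> u x \<noteq> 0 \<and> v x \<noteq> 0"
  using someI_ex[OF exists_nonzero_segment] unfolding c0_def[symmetric] by blast+

definition near :: "real \<Rightarrow> bool" where "near x \<longleftrightarrow> a < ereal x \<and> x < c0"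

lemma near_ivl: "near x \<Longrightarrow> x \<in> ivl a b"
  using ivl_convex[of x] c0(1) unfolding near_def ivl_def
  by (metis (mono_tags) ereal_less_eq(3) le_less_trans less_imp_le mem_Collect_eq)

lemma near_nonzero: "near x \<Longrightarrow> u x \<noteq> 0" "near x \<Longrightarrow> v x \<noteq> 0"
  using c0(3) unfolding near_def by auto

lemma near_between: "near s \<Longrightarrow> near t \<Longrightarrow> s \<le> x \<Longrightarrow> x \<le> t \<Longrightarrow> near x"
  unfolding near_def by (meson ereal_less_eq(3) less_le_trans le_less_trans)

lemma near_le_c: "near x \<Longrightarrow> x \<le> c"
  using c0(2) unfolding near_def by simp

lemma eventually_near: "eventually near (left_end_filter a)"
  using eventually_left_end_filter[OF c0(1)] unfolding near_def .

text \<open>The Wronskian normalisation makes u/v increasing, with derivative 1/(p v^2).\<close>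
lemma ratio_mono:
  assumes "near s" "near t" "s \<le> t"
  shows "u s / v s \<le> u t / v t"
proof -
  have sI: "s \<in> ivl a b" and tI: "t \<in> ivl a b" using near_ivl assms by auto
  have vnz: "\<forall>x\<in>{s..t}. v x \<noteq> 0" using near_between[OF assms(1,2)] near_nonzero by auto
  define k where "k x = 1 / (v x * v x) * (1 / p x)" for x
  have ki: "k absolutely_integrable_on {s..t}"
    unfolding k_def using continuous_on_uv(2)[OF sI tI] vnz
    by (intro L1_loc_continuous_mult_absolutely_integrable[OF L1_inverse_p sI tI] continuous_intros) auto
  have "AE x in lebesgue. x \<in> {s..t} \<longrightarrow> ((\<lambda>x. u x / v x) has_real_derivative k x) (at x)"
    using AE_ivl_restrict[OF u_deriv sI tI] AE_ivl_restrict[OF v_deriv sI tI] AE_ivl_restrict[OF p_pos sI tI]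
  proof eventually_elim
    case (elim x)
    show ?case
    proof
      assume x: "x \<in> {s..t}"
      then have "v x * u1 x - v1 x * u x = 1" using wronskian atLeastAtMost_subset_ivl[OF sI tI] by auto
      then show "((\<lambda>x. u x / v x) has_real_derivative k x) (at x)"
        using quasi_quotient_has_real_derivative[of u "u1 x" "p x" x v "v1 x"] elim x vnz
        unfolding k_def by (simp add: mult.commute)
    qed
  qed
  moreover have "abs_cont_on s t (\<lambda>x. u x / v x)"
    using abs_cont_on_divide[OF AC_loc_abs_cont_on[OF u_AC sI tI assms(3)]
        AC_loc_abs_cont_on[OF v_AC sI tI assms(3)] vnz] .
  ultimately have "u t / v t - u s / v s = integral {s..t} k"
    using abs_cont_on_diff_eq_integral[OF _ assms(3) ki] by blast
  moreover have "integral {s..t} k \<ge> 0"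
    using AE_ivl_restrict[OF p_pos sI tI]
    by (intro integral_nonneg_AE_absolutely_integrable[OF ki]) (auto elim!: eventually_mono simp: k_def)
  ultimately show ?thesis by simp
qed

lemma ratio_tendsto_0: "((\<lambda>x. u x / v x) \<longlongrightarrow> 0) (left_end_filter a)"
  using u_principal v_sol v_nonprincipal unfolding principal_at_a_def by blast

lemma ratio_pos:
  assumes "near x"
  shows "u x / v x > 0"
proof -
  have "eventually (\<lambda>t. u t / v t \<le> u x / v x) (left_end_filter a)"
    using eventually_left_end_filter[OF near_ivl[OF assms]]
  proof (rule eventually_mono)
    fix t assume "a < ereal t \<and> t < x"
    then show "u t / v t \<le> u x / v x"
      using ratio_mono[OF _ assms] assms unfolding near_def by auto
  qed
  then have "0 \<le> u x / v x"
    using tendsto_le[OF left_end_filter_neq_bot tendsto_const ratio_tendsto_0] by blast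
  moreover have "u x / v x \<noteq> 0" using near_nonzero[OF assms] by simp
  ultimately show ?thesis by (simp only: order_le_neq_trans)
qed

lemma green_kernel_bound:
  assumes "near t" "near x" "t \<le> x"
  shows "\<bar>u t * v x - v t * u x\<bar> \<le> \<bar>v t\<bar> * \<bar>u x\<bar>"
proof -
  have vt: "v t \<noteq> 0" and vx: "v x \<noteq> 0" using near_nonzero assms by auto
  have wt: "u t / v t > 0" and wx: "u x / v x > 0" using ratio_pos assms by auto
  have "\<bar>u t / v t - u x / v x\<bar> \<le> u x / v x" using wt wx ratio_mono[OF assms] by simp
  then have "\<bar>v t * v x\<bar> * \<bar>u t / v t - u x / v x\<bar> \<le> \<bar>v t * v x\<bar> * (u x / v x)"
    by (rule mult_left_mono) simp
  moreover have "u t * v x - v t * u x = v t * v x * (u t / v t - u x / v x)"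
    using vt vx by (simp add: field_simps)
  moreover have "\<bar>v t * v x\<bar> * (u x / v x) = \<bar>v t\<bar> * \<bar>u x\<bar>"
  proof -
    have "u x / v x = \<bar>u x\<bar> / \<bar>v x\<bar>" using wx by (metis abs_divide abs_of_pos)
    then show ?thesis using vx by (simp add: abs_mult)
  qed
  ultimately show ?thesis by (simp add: abs_mult)
qed

definition uvr_tail :: "real \<Rightarrow> real" where
  "uvr_tail x = (LINT t:{t. a < ereal t \<and> t < x}|lebesgue. \<bar>u t * v t * r t\<bar>)"

lemma uvr_integrable:
  "x \<le> c \<Longrightarrow> set_integrable lebesgue {t. a < ereal t \<and> t < x} (\<lambda>t. \<bar>u t * v t * r t\<bar>)"
  by (rule set_integrable_subset[OF set_integrable_abs[OF integrable] sets_lebesgue_left_segment]) auto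

lemma uvr_tail_nonneg: "uvr_tail x \<ge> 0"
  unfolding uvr_tail_def set_lebesgue_integral_def
  by (rule integral_nonneg_AE) (auto simp: indicator_def)

lemma uvr_tail_mono:
  assumes "t \<le> x" "x \<le> c"
  shows "uvr_tail t \<le> uvr_tail x"
  unfolding uvr_tail_def set_lebesgue_integral_def
  by (rule integral_mono) (use uvr_integrable assms in \<open>auto simp: set_integrable_def indicator_def\<close>)

lemma uvr_tail_tendsto_0: "(uvr_tail \<longlongrightarrow> 0) (left_end_filter a)"
  unfolding uvr_tail_def using tendsto_set_integral_left_segment[OF set_integrable_abs[OF integrable] c_in] .

lemma uvr_integrable_on:
  assumes "s \<in> ivl a b" "t \<in> ivl a b"
  shows "(\<lambda>x. \<bar>u x * v x * r x\<bar>) integrable_on {s..t}"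
proof -
  have "(\<lambda>x. \<bar>u x * v x\<bar> * \<bar>r x\<bar>) absolutely_integrable_on {s..t}"
    using continuous_on_uv[OF assms]
    by (intro L1_loc_continuous_mult_absolutely_integrable[OF L1_loc_abs[OF L1_r] assms] continuous_intros)
  then show ?thesis by (simp add: abs_mult set_lebesgue_integral_eq_integral(1))
qed

lemma integral_uvr_le_uvr_tail:
  assumes "near y" "y1 < x" "x \<le> c"
  shows "integral {y..y1} (\<lambda>t. \<bar>u t * v t * r t\<bar>) \<le> uvr_tail x"
proof (cases "y \<le> y1")
  case True
  have sub: "{y..y1} \<subseteq> {t. a < ereal t \<and> t < x}"
    using assms unfolding near_def by (auto intro: less_le_trans)
  have "set_integrable lebesgue {y..y1} (\<lambda>t. \<bar>u t * v t * r t\<bar>)"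
    by (rule set_integrable_subset[OF uvr_integrable[OF assms(3)] _ sub]) simp
  then have "integral {y..y1} (\<lambda>t. \<bar>u t * v t * r t\<bar>) = (LINT t:{y..y1}|lebesgue. \<bar>u t * v t * r t\<bar>)"
    by (simp add: set_lebesgue_integral_eq_integral(2))
  also have "\<dots> \<le> uvr_tail x"
    unfolding uvr_tail_def set_lebesgue_integral_def
    by (rule integral_mono)
       (use uvr_integrable[OF assms(3)] \<open>set_integrable lebesgue {y..y1} _\<close> sub
        in \<open>auto simp: set_integrable_def indicator_def\<close>)
  finally show ?thesis .
qed (simp add: uvr_tail_nonneg)

lemma exists_near_small_tail: "\<exists>c2. near c2 \<and> K * uvr_tail c2 < 1"
proof -
  have "eventually (\<lambda>x. K * uvr_tail x < 1) (left_end_filter a)"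
    using order_tendstoD(2)[OF tendsto_mult_right_zero[OF uvr_tail_tendsto_0, of K]] by simp
  then have "eventually (\<lambda>x. near x \<and> K * uvr_tail x < 1) (left_end_filter a)"
    using eventually_near by eventually_elim simp
  then show ?thesis using eventually_happens'[OF left_end_filter_neq_bot] by blast
qed

lemma phi_n_bound: "near x \<Longrightarrow> \<bar>phi_n a u v r n x\<bar> \<le> \<bar>u x\<bar> * uvr_tail x ^ n"
proof (induction n arbitrary: x)
  case (Suc n)
  define C where "C = \<bar>u x\<bar> * uvr_tail x ^ n"
  have "\<bar>(u t * v x - v t * u x) * phi_n a u v r n t * r t\<bar> \<le> C * \<bar>u t * v t * r t\<bar>"
    if t: "t \<in> {t. a < ereal t \<and> t < x}" for t
  proof -
    have "near t" "t \<le> x" using t Suc.prems unfolding near_def by auto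
    then have "\<bar>(u t * v x - v t * u x) * phi_n a u v r n t * r t\<bar>
        \<le> (\<bar>v t\<bar> * \<bar>u x\<bar>) * (\<bar>u t\<bar> * uvr_tail t ^ n) * \<bar>r t\<bar>"
      unfolding abs_mult using green_kernel_bound[OF _ Suc.prems] Suc.IH uvr_tail_nonneg
      by (intro mult_right_mono mult_mono) auto
    also have "\<dots> \<le> (\<bar>v t\<bar> * \<bar>u x\<bar>) * (\<bar>u t\<bar> * uvr_tail x ^ n) * \<bar>r t\<bar>"
      using uvr_tail_mono[OF \<open>t \<le> x\<close> near_le_c[OF Suc.prems]] uvr_tail_nonneg
      by (intro mult_right_mono mult_left_mono power_mono) auto
    also have "\<dots> = C * \<bar>u t * v t * r t\<bar>" unfolding C_def by (simp add: abs_mult)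
    finally show ?thesis .
  qed
  then have "\<bar>phi_n a u v r (Suc n) x\<bar> \<le> C * uvr_tail x"
    unfolding uvr_tail_def phi_n.simps
    by (intro set_integral_abs_le_mult uvr_integrable near_le_c Suc.prems)
  then show ?case unfolding C_def by (simp add: ac_simps)
qed simp

lemma phi_over_u_tendsto_1:
  "((\<lambda>x. phi a u v r lam z x / complex_of_real (u x)) \<longlongrightarrow> 1) (left_end_filter a)"
proof -
  define Q where "Q x = uvr_tail x * norm (z - complex_of_real lam)" for x
  have Qlim: "(Q \<longlongrightarrow> 0) (left_end_filter a)"
    unfolding Q_def using tendsto_mult_left_zero[OF uvr_tail_tendsto_0] by simp
  have "eventually (\<lambda>x. Q x < 1 / 2) (left_end_filter a)"
    using order_tendstoD(2)[OF Qlim, of "1/2"] by simp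
  then have "eventually (\<lambda>x. norm (phi a u v r lam z x / complex_of_real (u x) - 1) \<le> 2 * Q x) (left_end_filter a)"
    using eventually_near
  proof eventually_elim
    case (elim x)
    define A where "A n = complex_of_real (phi_n a u v r n x) * (z - complex_of_real lam) ^ n" for n
    have bnd: "norm (A n) \<le> \<bar>u x\<bar> * Q x ^ n" for n
      using phi_n_bound[OF elim(2), of n]
      unfolding A_def Q_def norm_mult norm_power power_mult_distrib mult.assoc[symmetric]
      by (intro mult_right_mono) auto
    have "norm (suminf A - A 0) \<le> 2 * \<bar>u x\<bar> * Q x"
      by (rule norm_suminf_minus_first_le[OF bnd]) (use elim(1) uvr_tail_nonneg in \<open>auto simp: Q_def\<close>)
    moreover have "phi a u v r lam z x / complex_of_real (u x) - 1 = (suminf A - A 0) / complex_of_real (u x)"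
      using near_nonzero[OF elim(2)] unfolding phi_def A_def by (simp add: field_simps)
    ultimately show ?case
      using near_nonzero[OF elim(2)] by (simp add: norm_divide divide_le_eq ac_simps)
  qed
  then have "((\<lambda>x. phi a u v r lam z x / complex_of_real (u x) - 1) \<longlongrightarrow> 0) (left_end_filter a)"
    by (rule Lim_null_comparison) (use tendsto_mult_right_zero[OF Qlim] in simp)
  then show ?thesis by (rule LIM_zero_cancel)
qed

lemma phi_ratio_tendsto_1:
  "((\<lambda>x. phi a u v r lam z1 x / phi a u v r lam z2 x) \<longlongrightarrow> 1) (left_end_filter a)"
proof -
  have "((\<lambda>x. (phi a u v r lam z1 x / complex_of_real (u x)) / (phi a u v r lam z2 x / complex_of_real (u x)))
      \<longlongrightarrow> 1 / 1) (left_end_filter a)"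
    by (rule tendsto_divide[OF phi_over_u_tendsto_1 phi_over_u_tendsto_1]) simp
  moreover have "eventually (\<lambda>x. (phi a u v r lam z1 x / complex_of_real (u x)) / (phi a u v r lam z2 x / complex_of_real (u x))
      = phi a u v r lam z1 x / phi a u v r lam z2 x) (left_end_filter a)"
    using eventually_near by eventually_elim (use near_nonzero in simp)
  ultimately show ?thesis by (simp add: Lim_transform_eventually)
qed

end

section \<open>Nonoscillation for every real spectral parameter\<close>

locale second_solution = principal_pair +
  fixes mu :: real and f f1 :: "real \<Rightarrow> real"
  assumes f_sol: "is_sol a b p q r mu f f1"
begin

lemma f_AC: "AC_loc (ivl a b) f" and f1_AC: "AC_loc (ivl a b) f1"
  and f_deriv: "AE x in lebesgue. x \<in> ivl a b \<longrightarrow> (f has_real_derivative f1 x / p x) (at x)"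
  using is_solD_real[OF f_sol] by auto

lemma continuous_on_f: "s \<in> ivl a b \<Longrightarrow> t \<in> ivl a b \<Longrightarrow> continuous_on {s..t} f"
  "s \<in> ivl a b \<Longrightarrow> t \<in> ivl a b \<Longrightarrow> continuous_on {s..t} f1"
  using AC_loc_imp_continuous_on f_AC f1_AC by blast+

text \<open>The coefficients of f in its variation-of-constants representation f = A u + B v.\<close>
definition A :: "real \<Rightarrow> real" where "A x = v x * f1 x - v1 x * f x"

definition B :: "real \<Rightarrow> real" where "B x = f x * u1 x - f1 x * u x"

lemma f_eq_A_B: "x \<in> ivl a b \<Longrightarrow> f x = A x * u x + B x * v x"
  using wronskian unfolding A_def B_def by (simp add: algebra_simps)

lemma A_diff_eq_integral:
  assumes "s \<in> ivl a b" "t \<in> ivl a b" "s \<le> t"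
  shows "(\<lambda>x. (lam - mu) * v x * f x * r x) absolutely_integrable_on {s..t}"
    "A t - A s = integral {s..t} (\<lambda>x. (lam - mu) * v x * f x * r x)"
  using wronskian_diff_eq_integral[OF coeffs v_sol f_sol assms] unfolding A_def by auto

lemma B_diff_eq_integral:
  assumes "s \<in> ivl a b" "t \<in> ivl a b" "s \<le> t"
  shows "(\<lambda>x. (mu - lam) * f x * u x * r x) absolutely_integrable_on {s..t}"
    "B t - B s = integral {s..t} (\<lambda>x. (mu - lam) * f x * u x * r x)"
  using wronskian_diff_eq_integral[OF coeffs f_sol u_sol assms] unfolding B_def by auto

lemma continuous_on_B: "s \<in> ivl a b \<Longrightarrow> t \<in> ivl a b \<Longrightarrow> continuous_on {s..t} B"
  unfolding B_def using continuous_on_f continuous_on_uv by (intro continuous_intros) auto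

lemma A_B_integrand_bounds:
  assumes "near s" "\<bar>f s\<bar> \<le> M * \<bar>u s\<bar>" "M \<ge> 0"
  shows "\<bar>(mu - lam) * f s * u s * r s\<bar> \<le> \<bar>mu - lam\<bar> * M * (u s / v s) * \<bar>u s * v s * r s\<bar>"
    "\<bar>(lam - mu) * v s * f s * r s\<bar> \<le> \<bar>mu - lam\<bar> * M * \<bar>u s * v s * r s\<bar>"
proof -
  have "(u s / v s) * (u s * v s) = u s * u s" using near_nonzero(2)[OF assms(1)] by simp
  then have "\<bar>u s / v s\<bar> * \<bar>u s * v s\<bar> = \<bar>u s\<bar> * \<bar>u s\<bar>" by (metis abs_mult)
  then have usq: "\<bar>u s\<bar> * \<bar>u s\<bar> = (u s / v s) * \<bar>u s * v s\<bar>"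
    using abs_of_pos[OF ratio_pos[OF assms(1)]] by metis
  have "\<bar>(mu - lam) * f s * u s * r s\<bar> = \<bar>mu - lam\<bar> * \<bar>f s\<bar> * \<bar>u s\<bar> * \<bar>r s\<bar>" by (simp add: abs_mult)
  also have "\<dots> \<le> \<bar>mu - lam\<bar> * (M * \<bar>u s\<bar>) * \<bar>u s\<bar> * \<bar>r s\<bar>"
    using assms(2) by (intro mult_right_mono mult_left_mono) auto
  also have "\<dots> = \<bar>mu - lam\<bar> * M * (\<bar>u s\<bar> * \<bar>u s\<bar>) * \<bar>r s\<bar>" by (simp add: ac_simps)
  also have "\<dots> = \<bar>mu - lam\<bar> * M * ((u s / v s) * \<bar>u s * v s\<bar>) * \<bar>r s\<bar>" by (simp only: usq)
  also have "\<dots> = \<bar>mu - lam\<bar> * M * (u s / v s) * \<bar>u s * v s * r s\<bar>" by (simp add: abs_mult ac_simps)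
  finally show "\<bar>(mu - lam) * f s * u s * r s\<bar> \<le> \<bar>mu - lam\<bar> * M * (u s / v s) * \<bar>u s * v s * r s\<bar>" .
  have "\<bar>(lam - mu) * v s * f s * r s\<bar> = \<bar>mu - lam\<bar> * \<bar>v s\<bar> * \<bar>f s\<bar> * \<bar>r s\<bar>"
    by (simp add: abs_mult abs_minus_commute)
  also have "\<dots> \<le> \<bar>mu - lam\<bar> * \<bar>v s\<bar> * (M * \<bar>u s\<bar>) * \<bar>r s\<bar>"
    using assms(2) by (intro mult_right_mono mult_left_mono) auto
  also have "\<dots> = \<bar>mu - lam\<bar> * M * \<bar>u s * v s * r s\<bar>" by (simp add: abs_mult ac_simps)
  finally show "\<bar>(lam - mu) * v s * f s * r s\<bar> \<le> \<bar>mu - lam\<bar> * M * \<bar>u s * v s * r s\<bar>" .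
qed

lemma A_B_increment_bounds:
  assumes y: "near y" "near y1" and st: "y \<le> s" "s \<le> t" "t \<le> y1"
    and fM: "\<forall>x\<in>{y..y1}. \<bar>f x\<bar> \<le> M * \<bar>u x\<bar>" "M \<ge> 0"
  defines "J \<equiv> integral {y..y1} (\<lambda>x. \<bar>u x * v x * r x\<bar>)"
  shows "\<bar>B t - B s\<bar> \<le> \<bar>mu - lam\<bar> * M * (u t / v t) * J"
    "\<bar>A t - A s\<bar> \<le> \<bar>mu - lam\<bar> * M * J"
proof -
  have near: "near x" if "x \<in> {y..y1}" for x using near_between[OF y] that by auto
  have sI: "s \<in> ivl a b" and tI: "t \<in> ivl a b" using near near_ivl st by auto
  have sub: "{s..t} \<subseteq> {y..y1}" using st by auto
  have R: "(\<lambda>x. \<bar>u x * v x * r x\<bar>) integrable_on {y..y1}" "\<forall>x\<in>{y..y1}. 0 \<le> \<bar>u x * v x * r x\<bar>"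
    using uvr_integrable_on near_ivl y by auto
  note Bi = B_diff_eq_integral[OF sI tI st(2)] and Ai = A_diff_eq_integral[OF sI tI st(2)]
  show "\<bar>B t - B s\<bar> \<le> \<bar>mu - lam\<bar> * M * (u t / v t) * J"
    unfolding Bi(2) J_def
  proof (rule integral_abs_le_mult_integral[OF _ R(1) sub R(2)])
    show "(\<lambda>x. (mu - lam) * f x * u x * r x) integrable_on {s..t}"
      using Bi(1) set_lebesgue_integral_eq_integral(1) by blast
    show "0 \<le> \<bar>mu - lam\<bar> * M * (u t / v t)"
      by (intro mult_nonneg_nonneg) (use fM(2) ratio_pos[of t] near[of t] st in auto)
    show "\<forall>x\<in>{s..t}. \<bar>(mu - lam) * f x * u x * r x\<bar> \<le> \<bar>mu - lam\<bar> * M * (u t / v t) * \<bar>u x * v x * r x\<bar>"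
    proof
      fix x assume x: "x \<in> {s..t}"
      then have "near x" "u x / v x \<le> u t / v t" using near sub ratio_mono[of x t] st by auto
      then have "\<bar>mu - lam\<bar> * M * (u x / v x) \<le> \<bar>mu - lam\<bar> * M * (u t / v t)"
        using fM(2) by (intro mult_left_mono) auto
      then show "\<bar>(mu - lam) * f x * u x * r x\<bar> \<le> \<bar>mu - lam\<bar> * M * (u t / v t) * \<bar>u x * v x * r x\<bar>"
        using A_B_integrand_bounds(1)[OF \<open>near x\<close> _ fM(2)] fM(1) x sub
        by (meson abs_ge_zero mult_right_mono order_trans subsetD)
    qed
  qed
  show "\<bar>A t - A s\<bar> \<le> \<bar>mu - lam\<bar> * M * J"
    unfolding Ai(2) J_def
  proof (rule integral_abs_le_mult_integral[OF _ R(1) sub R(2)])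
    show "(\<lambda>x. (lam - mu) * v x * f x * r x) integrable_on {s..t}"
      using Ai(1) set_lebesgue_integral_eq_integral(1) by blast
    show "\<forall>x\<in>{s..t}. \<bar>(lam - mu) * v x * f x * r x\<bar> \<le> \<bar>mu - lam\<bar> * M * \<bar>u x * v x * r x\<bar>"
      using A_B_integrand_bounds(2) near fM sub by blast
  qed (use fM(2) in simp)
qed

text \<open>Between y (where B vanishes) and a zero y1 of f, write
  f/u = (v/u - v(y1)/u(y1)) B - (v(y1)/u(y1)) (B(y1) - B) - (A(y1) - A):
  each of the three terms is at most |mu - lam| M times the integral of |u v r| over [y, y1].\<close>
lemma f_over_u_bound:
  assumes y: "near y" "near y1" and t: "y \<le> t" "t \<le> y1" and By: "B y = 0" and fy1: "f y1 = 0"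
    and fM: "\<forall>x\<in>{y..y1}. \<bar>f x\<bar> \<le> M * \<bar>u x\<bar>" "M \<ge> 0"
  shows "\<bar>f t / u t\<bar> \<le> 3 * (\<bar>mu - lam\<bar> * M * integral {y..y1} (\<lambda>x. \<bar>u x * v x * r x\<bar>))"
proof -
  define K where "K = \<bar>mu - lam\<bar> * M * integral {y..y1} (\<lambda>x. \<bar>u x * v x * r x\<bar>)"
  have nt: "near t" using near_between[OF y t] .
  have I: "t \<in> ivl a b" "y1 \<in> ivl a b" using near_ivl nt y(2) by auto
  have ut: "u t \<noteq> 0" "v t \<noteq> 0" and uy1: "u y1 \<noteq> 0" "v y1 \<noteq> 0" using near_nonzero nt y(2) by auto
  have wt: "u t / v t > 0" and wy1: "u y1 / v y1 > 0" using ratio_pos nt y(2) by auto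
  have b1: "\<bar>B t\<bar> \<le> (u t / v t) * K"
    using A_B_increment_bounds(1)[OF y order_refl t fM] By unfolding K_def by (simp add: ac_simps)
  have b2: "\<bar>B y1 - B t\<bar> \<le> (u y1 / v y1) * K"
    using A_B_increment_bounds(1)[OF y t order_refl fM] unfolding K_def by (simp add: ac_simps)
  have b3: "\<bar>A y1 - A t\<bar> \<le> K"
    using A_B_increment_bounds(2)[OF y t order_refl fM] unfolding K_def .
  have e1: "f t / u t = A t + B t * (v t / u t)"
    using f_eq_A_B[OF I(1)] ut(1) by (simp add: field_simps)
  have e2: "A y1 = - B y1 * (v y1 / u y1)"
    using f_eq_A_B[OF I(2)] fy1 uy1(1) by (simp add: field_simps)
  have eq: "f t / u t = (v t / u t - v y1 / u y1) * B t - (v y1 / u y1) * (B y1 - B t) - (A y1 - A t)"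
    unfolding e1 e2 by (simp add: algebra_simps)
  have "v y1 / u y1 \<le> v t / u t" "0 < v y1 / u y1"
    using le_imp_inverse_le[OF ratio_mono[OF nt y(2) t(2)] wt] positive_imp_inverse_positive[OF wy1]
    by (simp_all add: inverse_divide)
  then have "\<bar>(v t / u t - v y1 / u y1) * B t\<bar> \<le> (v t / u t) * ((u t / v t) * K)"
    unfolding abs_mult using b1 by (intro mult_mono) auto
  also have "\<dots> = K" using ut by simp
  finally have t1: "\<bar>(v t / u t - v y1 / u y1) * B t\<bar> \<le> K" .
  have "\<bar>(v y1 / u y1) * (B y1 - B t)\<bar> \<le> (v y1 / u y1) * ((u y1 / v y1) * K)"
    unfolding abs_mult using b2 \<open>0 < v y1 / u y1\<close> by (intro mult_mono) auto
  also have "\<dots> = K" using uy1 by simp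
  finally have t2: "\<bar>(v y1 / u y1) * (B y1 - B t)\<bar> \<le> K" .
  have tri: "\<bar>X - Y - Z\<bar> \<le> \<bar>X\<bar> + \<bar>Y\<bar> + \<bar>Z\<bar>" for X Y Z :: real by linarith
  show ?thesis unfolding eq K_def[symmetric]
    using order_trans[OF tri add_mono[OF add_mono[OF t1 t2] b3]] by simp
qed

lemma f_zero_on_segment:
  assumes y: "near y" "near y1" "y < y1" and By: "B y = 0" and fy1: "f y1 = 0"
    and c2: "y1 < c2" "c2 \<le> c" "3 * \<bar>mu - lam\<bar> * uvr_tail c2 < 1"
  shows "\<forall>t\<in>{y..y1}. f t = 0"
proof -
  have yI: "y \<in> ivl a b" "y1 \<in> ivl a b" using near_ivl y by auto
  have nt: "near t" if "t \<in> {y..y1}" for t using near_between[OF y(1,2)] that by auto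
  have "continuous_on {y..y1} (\<lambda>t. \<bar>f t / u t\<bar>)"
    using continuous_on_f(1)[OF yI] continuous_on_uv(1)[OF yI] near_nonzero nt
    by (intro continuous_intros) auto
  then obtain ts where ts: "ts \<in> {y..y1}" "\<forall>t\<in>{y..y1}. \<bar>f t / u t\<bar> \<le> \<bar>f ts / u ts\<bar>"
    using continuous_attains_sup[OF compact_Icc _ \<open>continuous_on {y..y1} _\<close>] y(3) by auto
  define M where "M = \<bar>f ts / u ts\<bar>"
  have fM: "\<forall>t\<in>{y..y1}. \<bar>f t\<bar> \<le> M * \<bar>u t\<bar>"
    using ts(2) near_nonzero nt unfolding M_def by (auto simp: abs_divide pos_divide_le_eq)
  have "M \<le> 3 * (\<bar>mu - lam\<bar> * M * integral {y..y1} (\<lambda>x. \<bar>u x * v x * r x\<bar>))"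
    using f_over_u_bound[OF y(1,2) _ _ By fy1 fM] ts(1) unfolding M_def by simp
  also have "\<dots> \<le> 3 * (\<bar>mu - lam\<bar> * M * uvr_tail c2)"
    using integral_uvr_le_uvr_tail[OF y(1) c2(1,2)] unfolding M_def
    by (intro mult_left_mono) auto
  finally have "M * (1 - 3 * \<bar>mu - lam\<bar> * uvr_tail c2) \<le> 0" by (simp add: algebra_simps)
  then have "M = 0" using c2(3) M_def by (simp add: mult_le_0_iff)
  then show ?thesis using fM by simp
qed

lemma f_over_u_diff_eq_integral:
  assumes "near s" "near t" "s \<le> t"
  shows "(\<lambda>x. - B x / (u x * u x) * (1 / p x)) absolutely_integrable_on {s..t}"
    "f t / u t - f s / u s = integral {s..t} (\<lambda>x. - B x / (u x * u x) * (1 / p x))"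
proof -
  have sI: "s \<in> ivl a b" and tI: "t \<in> ivl a b" using near_ivl assms by auto
  have unz: "\<forall>x\<in>{s..t}. u x \<noteq> 0" using near_between[OF assms(1,2)] near_nonzero by auto
  show ki: "(\<lambda>x. - B x / (u x * u x) * (1 / p x)) absolutely_integrable_on {s..t}"
    using unz continuous_on_B[OF sI tI] continuous_on_uv(1)[OF sI tI]
    by (intro L1_loc_continuous_mult_absolutely_integrable[OF L1_inverse_p sI tI] continuous_intros) auto
  have "AE x in lebesgue. x \<in> {s..t} \<longrightarrow>
      ((\<lambda>x. f x / u x) has_real_derivative - B x / (u x * u x) * (1 / p x)) (at x)"
    using AE_ivl_restrict[OF f_deriv sI tI] AE_ivl_restrict[OF u_deriv sI tI] AE_ivl_restrict[OF p_pos sI tI]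
  proof eventually_elim
    case (elim x)
    show ?case
      using quasi_quotient_has_real_derivative[of f "f1 x" "p x" x u "u1 x"] elim unz
      unfolding B_def by (auto simp: algebra_simps)
  qed
  moreover have "abs_cont_on s t (\<lambda>x. f x / u x)"
    using abs_cont_on_divide[OF AC_loc_abs_cont_on[OF f_AC sI tI assms(3)]
        AC_loc_abs_cont_on[OF u_AC sI tI assms(3)] unz] .
  ultimately show "f t / u t - f s / u s = integral {s..t} (\<lambda>x. - B x / (u x * u x) * (1 / p x))"
    using abs_cont_on_diff_eq_integral[OF _ assms(3) ki] by blast
qed

text \<open>Rolle's theorem for f/u, whose derivative is -B/(p u^2).\<close>
lemma B_zero_between_zeros:
  assumes x1: "near x1" "f x1 = 0" and y1: "near y1" "f y1 = 0" and "x1 < y1"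
  shows "\<exists>y. x1 \<le> y \<and> y < y1 \<and> B y = 0"
proof (rule ccontr)
  assume "\<not> ?thesis"
  then have Bnz: "B y \<noteq> 0" if "x1 \<le> y" "y < y1" for y using that by blast
  have I: "x1 \<in> ivl a b" "y1 \<in> ivl a b" using near_ivl x1 y1 by auto
  define \<sigma> :: real where "\<sigma> = (if B x1 > 0 then 1 else -1)"
  have \<sigma>: "\<sigma> * B y > 0" if y: "x1 \<le> y" "y < y1" for y
  proof (rule ccontr)
    assume "\<not> \<sigma> * B y > 0"
    moreover have "\<sigma> * B x1 > 0" using Bnz[of x1] \<open>x1 < y1\<close> unfolding \<sigma>_def by auto
    moreover have "continuous_on {x1..y} (\<lambda>t. \<sigma> * B t)"
      using continuous_on_B[OF I(1) ivl_convex[OF I y(1) less_imp_le[OF y(2)]]]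
      by (intro continuous_intros)
    ultimately obtain w where "x1 \<le> w" "w \<le> y" "\<sigma> * B w = 0"
      using IVT2'[of "\<lambda>t. \<sigma> * B t" y 0 x1] y by force
    then show False using Bnz[of w] y by (simp add: \<sigma>_def split: if_splits)
  qed
  note k = f_over_u_diff_eq_integral[OF x1(1) y1(1) less_imp_le[OF \<open>x1 < y1\<close>]]
  have "0 < integral {x1..y1} (\<lambda>x. - \<sigma> * (- B x / (u x * u x) * (1 / p x)))"
  proof (rule integral_pos_AE_absolutely_integrable[OF set_integrable_mult_right[OF k(1)] \<open>x1 < y1\<close>])
    have "AE x in lebesgue. x \<notin> {y1}" by (rule AE_not_in) simp
    then show "AE x in lebesgue. x \<in> {x1..y1} \<longrightarrow> 0 < - \<sigma> * (- B x / (u x * u x) * (1 / p x))"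
      using AE_ivl_restrict[OF p_pos I]
    proof eventually_elim
      case (elim x)
      show ?case
      proof
        assume x: "x \<in> {x1..y1}"
        then have "0 < \<sigma> * B x" "0 < p x" using \<sigma>[of x] elim by auto
        moreover have "0 < u x * u x"
          using near_nonzero(1)[OF near_between[OF x1(1) y1(1)], of x] x
          by (metis atLeastAtMost_iff power2_eq_square zero_less_power2)
        ultimately have "0 < (\<sigma> * B x) / (u x * u x) / p x" by (intro divide_pos_pos)
        then show "0 < - \<sigma> * (- B x / (u x * u x) * (1 / p x))" by simp
      qed
    qed
  qed
  also have "\<dots> = - \<sigma> * integral {x1..y1} (\<lambda>x. - B x / (u x * u x) * (1 / p x))"
    by (rule integral_mult_right)
  also have "\<dots> = 0" using k(2) x1(2) y1(2) by simp
  finally show False by simp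
qed

lemma finite_zeros_near_left_end:
  assumes nontrivial: "\<exists>x\<in>ivl a b. f x \<noteq> 0"
  shows "\<exists>c'\<in>ivl a b. finite {x. a < ereal x \<and> x < c' \<and> f x = 0}"
proof (rule ccontr)
  assume "\<not> ?thesis"
  then have zero_below: "\<exists>z. a < ereal z \<and> z < c' \<and> f z = 0" if "c' \<in> ivl a b" for c'
    using that by (metis (mono_tags, lifting) empty_Collect_eq finite.emptyI)
  have nonzero_below: "\<exists>t. a < ereal t \<and> t < w \<and> f t \<noteq> 0" if "near w" for w
    using is_sol_vanishing_near_left_end[OF coeffs f_sol near_ivl[OF that]] nontrivial by blast
  obtain c2 where c2: "near c2" "3 * \<bar>mu - lam\<bar> * uvr_tail c2 < 1"
    using exists_near_small_tail by blast
  obtain y0 where y0: "a < ereal y0" "y0 < c2" "f y0 = 0" using zero_below[OF near_ivl[OF c2(1)]] by blast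
  have ny0: "near y0" using y0 c2(1) unfolding near_def by simp
  obtain t0 where t0: "a < ereal t0" "t0 < y0" "f t0 \<noteq> 0" using nonzero_below[OF ny0] by blast
  have nt0: "near t0" using t0 ny0 unfolding near_def by simp
  obtain z0 where z0: "a < ereal z0" "z0 < t0" "f z0 = 0" using zero_below[OF near_ivl[OF nt0]] by blast
  have nz0: "near z0" using z0 nt0 unfolding near_def by simp
  obtain x1 y1 where xy: "z0 \<le> x1" "x1 < t0" "t0 < y1" "y1 \<le> y0" "f x1 = 0" "f y1 = 0"
    and gap: "\<forall>t\<in>{x1<..<y1}. f t \<noteq> 0"
    using consecutive_zeros[OF continuous_on_f(1)[OF near_ivl[OF nz0] near_ivl[OF ny0]] z0(2) t0(2,3) z0(3) y0(3)] .
  have nx1: "near x1" using near_between[OF nz0 ny0 xy(1)] xy(2) t0(2) by simp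
  have ny1: "near y1" using near_between[OF nz0 ny0 _ xy(4)] xy(1-3) by simp
  obtain y where y: "x1 \<le> y" "y < y1" "B y = 0"
    using B_zero_between_zeros[OF nx1 xy(5) ny1 xy(6)] xy(2,3) by auto
  have "\<forall>t\<in>{y..y1}. f t = 0"
    using f_zero_on_segment[OF near_between[OF nx1 ny1 y(1) less_imp_le[OF y(2)]] ny1 y(2,3) xy(6) _
        near_le_c[OF c2(1)] c2(2)] xy(4) y0(2) by simp
  moreover have "f ((y + y1) / 2) \<noteq> 0" using gap y by simp
  ultimately show False using y(2) by simp
qed

end

theorem mainTheorem4:
  fixes a b :: ereal and p q r u v u1 v1 :: "real \<Rightarrow> real" and lam c :: real
  assumes coeffs: "SL_coeffs a b p q r"
    and nonosc: "nonosc_at_a a b p q r lam"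
    and u_sol: "is_sol a b p q r lam u u1"
    and v_sol: "is_sol a b p q r lam v v1"
    and u_principal: "principal_at_a a b p q r lam u"
    and v_nonprincipal: "lin_indep_on (ivl a b) u v"
    and wronskian: "\<forall>x\<in>ivl a b. v x * u1 x - v1 x * u x = 1"
    and c_in: "c \<in> ivl a b"
    and integrable: "set_integrable lebesgue {x. a < ereal x \<and> x < c} (\<lambda>x. u x * v x * r x)"
  shows "(\<forall>z1 z2. ((\<lambda>x. phi a u v r lam z1 x / phi a u v r lam z2 x) \<longlongrightarrow> 1) (left_end_filter a))
         \<and> (\<forall>\<mu>::real. nonosc_at_a a b p q r \<mu>)"
proof -
  interpret principal_pair a b p q r u v u1 v1 lam c
    using assms by unfold_locales
  have "nonosc_at_a a b p q r \<mu>" for \<mu>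
    unfolding nonosc_at_a_def
  proof (intro allI impI)
    fix f f1 assume f: "is_sol a b p q r \<mu> f f1 \<and> (\<exists>x\<in>ivl a b. f x \<noteq> 0)"
    interpret second_solution a b p q r u v u1 v1 lam c \<mu> f f1
      using f by unfold_locales blast
    show "\<exists>c\<in>ivl a b. finite {x. a < ereal x \<and> x < c \<and> f x = 0}"
      using finite_zeros_near_left_end f by blast
  qed
  then show ?thesis using phi_ratio_tendsto_1 by blast
qed

end
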